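(* Let $\mathbf K$ be an M$\Delta$C generated as a thick subcategory by a single object $G$. The maps \[\Phi(\mathbf I)=\{\mathbf P\in\operatorname{Spc}\mathbf K:\mathbf I\not\subseteq\mathbf P\}=\bigcup_{A\in\mathbf I}V(A),\qquad \Theta(S)=\bigcap_{\mathbf P\in\operatorname{Spc}\mathbf K\setminus S}\mathbf P\] restrict to mutually inverse, order-preserving bijections between the set of semiprime thick ideals of $\mathbf K$ and the set of Thomason subsets of $\operatorname{Spc}\mathbf K$.
   Context: M$\Delta$C: triangulated category with monoidal structure $(\otimes,\mathbf 1)$, $\otimes$ exact in each variable. Thick ideal: full triangulated subcategory closed under summands and two-sided tensoring. Prime ideal: proper thick ideal $\mathbf P$ with $\mathbf I\otimes\mathbf J\subseteq\mathbf P\Rightarrow\mathbf I\subseteq\mathbf P$ or $\mathbf J\subseteq\mathbf P$; a thick ideal is semiprime if it is an intersection of prime ideals. $\operatorname{Spc}\mathbf K$: set of primes with closed sets the intersections of $V(A)=\{\mathbf P:A\notin\mathbf P\}$. A Thomason subset of a topological space is a union of closed subsets each having quasicompact complement. The intersection over the empty family in $\Theta$ is $\mathbf K$. *)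

theory Defs
  imports "HOL-Analysis.Abstract_Topology"
begin

text \<open>A category with objects of type 'o and morphisms of type 'm, carried by
explicit sets. cmp C g f is the composite "g after f".\<close>

record ('o,'m) mdc =
  Ob :: "'o set"
  Mor :: "'m set"
  mdom :: "'m \<Rightarrow> 'o"
  mcod :: "'m \<Rightarrow> 'o"
  cmp :: "'m \<Rightarrow> 'm \<Rightarrow> 'm"
  idm :: "'o \<Rightarrow> 'm"
  madd :: "'m \<Rightarrow> 'm \<Rightarrow> 'm"
  mneg :: "'m \<Rightarrow> 'm"
  mzero :: "'o \<Rightarrow> 'o \<Rightarrow> 'm"
  shO :: "'o \<Rightarrow> 'o"
  shM :: "'m \<Rightarrow> 'm"
  Dist :: "('m \<times> 'm \<times> 'm) set"
  tenO :: "'o \<Rightarrow> 'o \<Rightarrow> 'o"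
  tenM :: "'m \<Rightarrow> 'm \<Rightarrow> 'm"
  unitO :: "'o"
  assoc :: "'o \<Rightarrow> 'o \<Rightarrow> 'o \<Rightarrow> 'm"   \<comment> \<open>(A*B)*D -> A*(B*D)\<close>
  lunit :: "'o \<Rightarrow> 'm"                 \<comment> \<open>1*A -> A\<close>
  runit :: "'o \<Rightarrow> 'm"                 \<comment> \<open>A*1 -> A\<close>
  ltw :: "'o \<Rightarrow> 'o \<Rightarrow> 'm"           \<comment> \<open>(Sigma A)*B -> Sigma(A*B)\<close>
  rtw :: "'o \<Rightarrow> 'o \<Rightarrow> 'm"           \<comment> \<open>A*(Sigma B) -> Sigma(A*B)\<close>

definition hom :: "('o,'m,'x) mdc_scheme \<Rightarrow> 'o \<Rightarrow> 'o \<Rightarrow> 'm set" where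
  "hom C A B = {f \<in> Mor C. mdom C f = A \<and> mcod C f = B}"

definition is_category :: "('o,'m,'x) mdc_scheme \<Rightarrow> bool" where
  "is_category C \<longleftrightarrow>
     (\<forall>f\<in>Mor C. mdom C f \<in> Ob C \<and> mcod C f \<in> Ob C) \<and>
     (\<forall>A\<in>Ob C. idm C A \<in> hom C A A) \<and>
     (\<forall>f\<in>Mor C. \<forall>g\<in>Mor C. mcod C f = mdom C g \<longrightarrow>
          cmp C g f \<in> hom C (mdom C f) (mcod C g)) \<and>
     (\<forall>f\<in>Mor C. cmp C (idm C (mcod C f)) f = f \<and> cmp C f (idm C (mdom C f)) = f) \<and>
     (\<forall>f\<in>Mor C. \<forall>g\<in>Mor C. \<forall>h\<in>Mor C. mcod C f = mdom C g \<and> mcod C g = mdom C h \<longrightarrow>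
          cmp C h (cmp C g f) = cmp C (cmp C h g) f)"

definition is_preadditive :: "('o,'m,'x) mdc_scheme \<Rightarrow> bool" where
  "is_preadditive C \<longleftrightarrow>
     (\<forall>A\<in>Ob C. \<forall>B\<in>Ob C.
        mzero C A B \<in> hom C A B \<and>
        (\<forall>f\<in>hom C A B. mneg C f \<in> hom C A B \<and> madd C f (mneg C f) = mzero C A B \<and>
                         madd C f (mzero C A B) = f) \<and>
        (\<forall>f\<in>hom C A B. \<forall>g\<in>hom C A B. madd C f g \<in> hom C A B \<and> madd C f g = madd C g f) \<and>
        (\<forall>f\<in>hom C A B. \<forall>g\<in>hom C A B. \<forall>h\<in>hom C A B.
            madd C (madd C f g) h = madd C f (madd C g h))) \<and>
     (\<forall>A\<in>Ob C. \<forall>B\<in>Ob C. \<forall>D\<in>Ob C. \<forall>f\<in>hom C A B. \<forall>g\<in>hom C A B. \<forall>h\<in>hom C B D.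
        cmp C h (madd C f g) = madd C (cmp C h f) (cmp C h g)) \<and>
     (\<forall>A\<in>Ob C. \<forall>B\<in>Ob C. \<forall>D\<in>Ob C. \<forall>h\<in>hom C A B. \<forall>f\<in>hom C B D. \<forall>g\<in>hom C B D.
        cmp C (madd C f g) h = madd C (cmp C f h) (cmp C g h))"

definition is_zero_obj :: "('o,'m,'x) mdc_scheme \<Rightarrow> 'o \<Rightarrow> bool" where
  "is_zero_obj C Z \<longleftrightarrow> Z \<in> Ob C \<and> idm C Z = mzero C Z Z"

definition is_biprod ::
  "('o,'m,'x) mdc_scheme \<Rightarrow> 'o \<Rightarrow> 'o \<Rightarrow> 'o \<Rightarrow> 'm \<Rightarrow> 'm \<Rightarrow> 'm \<Rightarrow> 'm \<Rightarrow> bool" where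
  "is_biprod C A A' B i1 p1 i2 p2 \<longleftrightarrow>
     i1 \<in> hom C A B \<and> p1 \<in> hom C B A \<and> i2 \<in> hom C A' B \<and> p2 \<in> hom C B A' \<and>
     cmp C p1 i1 = idm C A \<and> cmp C p2 i2 = idm C A' \<and>
     cmp C p1 i2 = mzero C A' A \<and> cmp C p2 i1 = mzero C A A' \<and>
     madd C (cmp C i1 p1) (cmp C i2 p2) = idm C B"

definition is_summand :: "('o,'m,'x) mdc_scheme \<Rightarrow> 'o \<Rightarrow> 'o \<Rightarrow> bool" where
  "is_summand C A B \<longleftrightarrow> A \<in> Ob C \<and> B \<in> Ob C \<and>
     (\<exists>A'\<in>Ob C. \<exists>i1 p1 i2 p2. is_biprod C A A' B i1 p1 i2 p2)"

definition is_additive :: "('o,'m,'x) mdc_scheme \<Rightarrow> bool" where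
  "is_additive C \<longleftrightarrow> is_category C \<and> is_preadditive C \<and> (\<exists>Z. is_zero_obj C Z) \<and>
     (\<forall>A\<in>Ob C. \<forall>A'\<in>Ob C. \<exists>B\<in>Ob C. \<exists>i1 p1 i2 p2. is_biprod C A A' B i1 p1 i2 p2)"

definition is_iso :: "('o,'m,'x) mdc_scheme \<Rightarrow> 'm \<Rightarrow> bool" where
  "is_iso C f \<longleftrightarrow> f \<in> Mor C \<and> (\<exists>g\<in>hom C (mcod C f) (mdom C f).
      cmp C g f = idm C (mdom C f) \<and> cmp C f g = idm C (mcod C f))"

definition is_triangle :: "('o,'m,'x) mdc_scheme \<Rightarrow> 'm \<times> 'm \<times> 'm \<Rightarrow> bool" where
  "is_triangle C t \<longleftrightarrow> (case t of (f,g,h) \<Rightarrow>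
     f \<in> Mor C \<and> g \<in> Mor C \<and> h \<in> Mor C \<and> mcod C f = mdom C g \<and> mcod C g = mdom C h \<and>
     mcod C h = shO C (mdom C f))"

definition is_tri_mor ::
  "('o,'m,'x) mdc_scheme \<Rightarrow> 'm \<times> 'm \<times> 'm \<Rightarrow> 'm \<times> 'm \<times> 'm \<Rightarrow> 'm \<times> 'm \<times> 'm \<Rightarrow> bool" where
  "is_tri_mor C t t' m \<longleftrightarrow> (case t of (f,g,h) \<Rightarrow> case t' of (f',g',h') \<Rightarrow> case m of (a,b,c) \<Rightarrow>
     is_triangle C t \<and> is_triangle C t' \<and>
     a \<in> hom C (mdom C f) (mdom C f') \<and> b \<in> hom C (mdom C g) (mdom C g') \<and>
     c \<in> hom C (mdom C h) (mdom C h') \<and>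
     cmp C b f = cmp C f' a \<and> cmp C c g = cmp C g' b \<and> cmp C (shM C a) h = cmp C h' c)"

definition is_triangulated :: "('o,'m,'x) mdc_scheme \<Rightarrow> bool" where
  "is_triangulated C \<longleftrightarrow> is_additive C \<and>
     \<comment> \<open>the shift is an additive automorphism\<close>
     bij_betw (shO C) (Ob C) (Ob C) \<and>
     (\<forall>A\<in>Ob C. \<forall>B\<in>Ob C. bij_betw (shM C) (hom C A B) (hom C (shO C A) (shO C B))) \<and>
     (\<forall>A\<in>Ob C. shM C (idm C A) = idm C (shO C A)) \<and>
     (\<forall>f\<in>Mor C. \<forall>g\<in>Mor C. mcod C f = mdom C g \<longrightarrow> shM C (cmp C g f) = cmp C (shM C g) (shM C f)) \<and>
     (\<forall>A\<in>Ob C. \<forall>B\<in>Ob C. \<forall>f\<in>hom C A B. \<forall>g\<in>hom C A B. shM C (madd C f g) = madd C (shM C f) (shM C g)) \<and>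
     \<comment> \<open>TR1\<close>
     (\<forall>t\<in>Dist C. is_triangle C t) \<and>
     (\<forall>t t' a b c. t \<in> Dist C \<and> is_tri_mor C t t' (a,b,c) \<and> is_iso C a \<and> is_iso C b \<and> is_iso C c
         \<longrightarrow> t' \<in> Dist C) \<and>
     (\<forall>X\<in>Ob C. \<forall>Z. is_zero_obj C Z \<longrightarrow> (idm C X, mzero C X Z, mzero C Z (shO C X)) \<in> Dist C) \<and>
     (\<forall>f\<in>Mor C. \<exists>g h. (f,g,h) \<in> Dist C) \<and>
     \<comment> \<open>TR2\<close>
     (\<forall>f g h. is_triangle C (f,g,h) \<longrightarrow>
         ((f,g,h) \<in> Dist C \<longleftrightarrow> (g, h, mneg C (shM C f)) \<in> Dist C)) \<and>
     \<comment> \<open>TR3\<close>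
     (\<forall>f g h f' g' h' a b. (f,g,h) \<in> Dist C \<and> (f',g',h') \<in> Dist C \<and>
         a \<in> hom C (mdom C f) (mdom C f') \<and> b \<in> hom C (mdom C g) (mdom C g') \<and>
         cmp C b f = cmp C f' a \<longrightarrow> (\<exists>c. is_tri_mor C (f,g,h) (f',g',h') (a,b,c))) \<and>
     \<comment> \<open>TR4 (octahedral axiom)\<close>
     (\<forall>f g u a v b w c. (f,u,a) \<in> Dist C \<and> (g,v,b) \<in> Dist C \<and> (cmp C g f, w, c) \<in> Dist C \<and>
         mcod C f = mdom C g \<longrightarrow>
        (\<exists>p q. p \<in> hom C (mcod C u) (mcod C w) \<and> q \<in> hom C (mcod C w) (mcod C v) \<and>
           (p, q, cmp C (shM C u) b) \<in> Dist C \<and>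
           cmp C p u = cmp C w g \<and> cmp C c p = a \<and> cmp C q w = v \<and>
           cmp C b q = cmp C (shM C f) c))"

definition is_monoidal_triangulated :: "('o,'m,'x) mdc_scheme \<Rightarrow> bool" where
  "is_monoidal_triangulated C \<longleftrightarrow> is_triangulated C \<and>
     \<comment> \<open>tensor bifunctor, additive in each variable\<close>
     unitO C \<in> Ob C \<and>
     (\<forall>A\<in>Ob C. \<forall>B\<in>Ob C. tenO C A B \<in> Ob C) \<and>
     (\<forall>A\<in>Ob C. \<forall>B\<in>Ob C. \<forall>A'\<in>Ob C. \<forall>B'\<in>Ob C. \<forall>f\<in>hom C A B. \<forall>g\<in>hom C A' B'.
         tenM C f g \<in> hom C (tenO C A A') (tenO C B B')) \<and>
     (\<forall>A\<in>Ob C. \<forall>B\<in>Ob C. tenM C (idm C A) (idm C B) = idm C (tenO C A B)) \<and>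
     (\<forall>f\<in>Mor C. \<forall>g\<in>Mor C. \<forall>f'\<in>Mor C. \<forall>g'\<in>Mor C. mcod C f = mdom C g \<and> mcod C f' = mdom C g' \<longrightarrow>
         tenM C (cmp C g f) (cmp C g' f') = cmp C (tenM C g g') (tenM C f f')) \<and>
     (\<forall>A\<in>Ob C. \<forall>B\<in>Ob C. \<forall>f\<in>hom C A B. \<forall>g\<in>hom C A B. \<forall>h\<in>Mor C.
         tenM C (madd C f g) h = madd C (tenM C f h) (tenM C g h) \<and>
         tenM C h (madd C f g) = madd C (tenM C h f) (tenM C h g)) \<and>
     \<comment> \<open>associator and unitors: natural isomorphisms satisfying pentagon and triangle\<close>
     (\<forall>A\<in>Ob C. \<forall>B\<in>Ob C. \<forall>D\<in>Ob C.
         assoc C A B D \<in> hom C (tenO C (tenO C A B) D) (tenO C A (tenO C B D)) \<and>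
         is_iso C (assoc C A B D)) \<and>
     (\<forall>A\<in>Ob C. lunit C A \<in> hom C (tenO C (unitO C) A) A \<and> is_iso C (lunit C A) \<and>
                runit C A \<in> hom C (tenO C A (unitO C)) A \<and> is_iso C (runit C A)) \<and>
     (\<forall>f\<in>Mor C. \<forall>g\<in>Mor C. \<forall>h\<in>Mor C.
         cmp C (assoc C (mcod C f) (mcod C g) (mcod C h)) (tenM C (tenM C f g) h) =
         cmp C (tenM C f (tenM C g h)) (assoc C (mdom C f) (mdom C g) (mdom C h))) \<and>
     (\<forall>f\<in>Mor C. cmp C (lunit C (mcod C f)) (tenM C (idm C (unitO C)) f) = cmp C f (lunit C (mdom C f)) \<and>
                 cmp C (runit C (mcod C f)) (tenM C f (idm C (unitO C))) = cmp C f (runit C (mdom C f))) \<and>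
     (\<forall>A\<in>Ob C. \<forall>B\<in>Ob C. \<forall>D\<in>Ob C. \<forall>E\<in>Ob C.
         cmp C (assoc C A B (tenO C D E)) (assoc C (tenO C A B) D E) =
         cmp C (tenM C (idm C A) (assoc C B D E))
               (cmp C (assoc C A (tenO C B D) E) (tenM C (assoc C A B D) (idm C E)))) \<and>
     (\<forall>A\<in>Ob C. \<forall>B\<in>Ob C.
         cmp C (tenM C (idm C A) (lunit C B)) (assoc C A (unitO C) B) = tenM C (runit C A) (idm C B)) \<and>
     \<comment> \<open>exactness of the tensor product in each variable\<close>
     (\<forall>A\<in>Ob C. \<forall>B\<in>Ob C.
         ltw C A B \<in> hom C (tenO C (shO C A) B) (shO C (tenO C A B)) \<and> is_iso C (ltw C A B) \<and>
         rtw C A B \<in> hom C (tenO C A (shO C B)) (shO C (tenO C A B)) \<and> is_iso C (rtw C A B)) \<and>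
     (\<forall>B\<in>Ob C. \<forall>f\<in>Mor C.
         cmp C (ltw C (mcod C f) B) (tenM C (shM C f) (idm C B)) =
           cmp C (shM C (tenM C f (idm C B))) (ltw C (mdom C f) B) \<and>
         cmp C (rtw C B (mcod C f)) (tenM C (idm C B) (shM C f)) =
           cmp C (shM C (tenM C (idm C B) f)) (rtw C B (mdom C f))) \<and>
     (\<forall>B\<in>Ob C. \<forall>f g h. (f,g,h) \<in> Dist C \<longrightarrow>
         (tenM C f (idm C B), tenM C g (idm C B), cmp C (ltw C (mdom C f) B) (tenM C h (idm C B))) \<in> Dist C \<and>
         (tenM C (idm C B) f, tenM C (idm C B) g, cmp C (rtw C B (mdom C f)) (tenM C (idm C B) h)) \<in> Dist C)"

definition thick :: "('o,'m,'x) mdc_scheme \<Rightarrow> 'o set \<Rightarrow> bool" where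
  "thick C S \<longleftrightarrow> S \<subseteq> Ob C \<and> (\<exists>Z\<in>S. is_zero_obj C Z) \<and>
     (\<forall>A\<in>Ob C. shO C A \<in> S \<longleftrightarrow> A \<in> S) \<and>
     (\<forall>f g h. (f,g,h) \<in> Dist C \<and> mdom C f \<in> S \<and> mdom C g \<in> S \<longrightarrow> mcod C g \<in> S) \<and>
     (\<forall>A B. is_summand C A B \<and> B \<in> S \<longrightarrow> A \<in> S)"

definition thick_gen :: "('o,'m,'x) mdc_scheme \<Rightarrow> 'o set \<Rightarrow> 'o set" where
  "thick_gen C X = \<Inter>{S. thick C S \<and> X \<subseteq> S}"

definition thick_ideal :: "('o,'m,'x) mdc_scheme \<Rightarrow> 'o set \<Rightarrow> bool" where
  "thick_ideal C I \<longleftrightarrow> thick C I \<and> (\<forall>A\<in>I. \<forall>B\<in>Ob C. tenO C A B \<in> I \<and> tenO C B A \<in> I)"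

definition tensor_set :: "('o,'m,'x) mdc_scheme \<Rightarrow> 'o set \<Rightarrow> 'o set \<Rightarrow> 'o set" where
  "tensor_set C I J = {tenO C A B | A B. A \<in> I \<and> B \<in> J}"

definition prime_ideal :: "('o,'m,'x) mdc_scheme \<Rightarrow> 'o set \<Rightarrow> bool" where
  "prime_ideal C P \<longleftrightarrow> thick_ideal C P \<and> P \<noteq> Ob C \<and>
     (\<forall>I J. thick_ideal C I \<and> thick_ideal C J \<and> tensor_set C I J \<subseteq> P \<longrightarrow> I \<subseteq> P \<or> J \<subseteq> P)"

definition Spc :: "('o,'m,'x) mdc_scheme \<Rightarrow> 'o set set" where
  "Spc C = {P. prime_ideal C P}"

text \<open>Intersection of a family of primes inside K (empty family gives K).\<close>
definition semiprime :: "('o,'m,'x) mdc_scheme \<Rightarrow> 'o set \<Rightarrow> bool" where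
  "semiprime C I \<longleftrightarrow> thick_ideal C I \<and> (\<exists>F. F \<subseteq> Spc C \<and> I = Ob C \<inter> \<Inter>F)"

definition Vsupp :: "('o,'m,'x) mdc_scheme \<Rightarrow> 'o \<Rightarrow> 'o set set" where
  "Vsupp C A = {P \<in> Spc C. A \<notin> P}"

text \<open>Balmer topology: closed sets are intersections (in Spc) of sets V(A).\<close>
definition spc_top :: "('o,'m,'x) mdc_scheme \<Rightarrow> 'o set topology" where
  "spc_top C = topology (\<lambda>U. U \<subseteq> Spc C \<and>
      (\<exists>\<A>. \<A> \<subseteq> Ob C \<and> Spc C - U = Spc C \<inter> \<Inter>(Vsupp C ` \<A>)))"

definition thomason :: "'a topology \<Rightarrow> 'a set \<Rightarrow> bool" where
  "thomason T Y \<longleftrightarrow> (\<exists>\<Z>. (\<forall>Z\<in>\<Z>. closedin T Z \<and> compactin T (topspace T - Z)) \<and> Y = \<Union>\<Z>)"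

definition Phi :: "('o,'m,'x) mdc_scheme \<Rightarrow> 'o set \<Rightarrow> 'o set set" where
  "Phi C I = {P \<in> Spc C. \<not> I \<subseteq> P}"

definition Theta :: "('o,'m,'x) mdc_scheme \<Rightarrow> 'o set set \<Rightarrow> 'o set" where
  "Theta C S = Ob C \<inter> \<Inter>(Spc C - S)"

end

theory Submission
  imports Defs
begin

text \<open>
  \<Phi> and \<Theta> form a Galois connection between thick ideals and subsets of Spc K whose closed
  ideals are exactly the semiprime ones, so \<Theta> \<Phi> I = I for semiprime I. The other composite is
  the identity on S as soon as S is a union of supports V(A) of objects. Thomason subsets are such unions
  because every closed set with quasi-compact complement is a single support: a closed set is an
  intersection of supports, quasi-compactness makes it a finite one, and the generator turns finite
  intersections into supports, V(A \<otimes> G \<otimes> B) = V(A) \<inter> V(B), since the objects X with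
  A \<otimes> X \<otimes> B in a prime P form a thick subcategory. Conversely each V(A) is closed with
  quasi-compact complement; quasi-compactness comes from a Zorn argument producing primes that avoid the
  system generated by a set of objects under x \<cdot> y = x \<otimes> G \<otimes> y.
\<close>

section \<open>Preadditive and additive categories\<close>

locale preadditive_category =
  fixes C :: "('o,'m,'x) mdc_scheme"
  assumes category: "is_category C"
    and preadditive: "is_preadditive C"
begin

lemma in_hom_iff: "f \<in> hom C A B \<longleftrightarrow> f \<in> Mor C \<and> mdom C f = A \<and> mcod C f = B"
  by (simp add: hom_def)

lemma Mor_dom_cod_Ob: "f \<in> Mor C \<Longrightarrow> mdom C f \<in> Ob C \<and> mcod C f \<in> Ob C"
  using category unfolding is_category_def by blast

lemma hom_Ob: "f \<in> hom C A B \<Longrightarrow> A \<in> Ob C \<and> B \<in> Ob C"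
  using Mor_dom_cod_Ob unfolding in_hom_iff by blast

lemma idm_in_hom: "A \<in> Ob C \<Longrightarrow> idm C A \<in> hom C A A"
  using category unfolding is_category_def by blast

lemma cmp_in_hom:
  assumes "f \<in> hom C A B" "g \<in> hom C B D"
  shows "cmp C g f \<in> hom C A D"
proof -
  have "\<forall>f\<in>Mor C. \<forall>g\<in>Mor C. mcod C f = mdom C g \<longrightarrow>
      cmp C g f \<in> hom C (mdom C f) (mcod C g)"
    using category unfolding is_category_def by blast
  then show ?thesis using assms unfolding in_hom_iff by force
qed

lemma cmp_idm:
  assumes "f \<in> hom C A B"
  shows "cmp C (idm C B) f = f \<and> cmp C f (idm C A) = f"
proof -
  have "\<forall>f\<in>Mor C. cmp C (idm C (mcod C f)) f = f \<and> cmp C f (idm C (mdom C f)) = f"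
    using category unfolding is_category_def by blast
  then show ?thesis using assms unfolding in_hom_iff by force
qed

lemma cmp_idm_left: "f \<in> hom C A B \<Longrightarrow> cmp C (idm C B) f = f"
  using cmp_idm by blast

lemma cmp_idm_right: "f \<in> hom C A B \<Longrightarrow> cmp C f (idm C A) = f"
  using cmp_idm by blast

lemma cmp_assoc:
  assumes "f \<in> hom C A B" "g \<in> hom C B D" "h \<in> hom C D E"
  shows "cmp C h (cmp C g f) = cmp C (cmp C h g) f"
proof -
  have "\<forall>f\<in>Mor C. \<forall>g\<in>Mor C. \<forall>h\<in>Mor C. mcod C f = mdom C g \<and> mcod C g = mdom C h \<longrightarrow>
      cmp C h (cmp C g f) = cmp C (cmp C h g) f"
    using category unfolding is_category_def by blast
  then show ?thesis using assms unfolding in_hom_iff by force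
qed

lemma hom_abelian_group:
  assumes "A \<in> Ob C" "B \<in> Ob C"
  shows "mzero C A B \<in> hom C A B \<and>
    (\<forall>f\<in>hom C A B. mneg C f \<in> hom C A B \<and> madd C f (mneg C f) = mzero C A B \<and>
                     madd C f (mzero C A B) = f) \<and>
    (\<forall>f\<in>hom C A B. \<forall>g\<in>hom C A B. madd C f g \<in> hom C A B \<and> madd C f g = madd C g f) \<and>
    (\<forall>f\<in>hom C A B. \<forall>g\<in>hom C A B. \<forall>h\<in>hom C A B. madd C (madd C f g) h = madd C f (madd C g h))"
  using preadditive assms unfolding is_preadditive_def by blast

lemma mzero_in_hom: "A \<in> Ob C \<Longrightarrow> B \<in> Ob C \<Longrightarrow> mzero C A B \<in> hom C A B"
  using hom_abelian_group by blast

lemma mneg_in_hom: "f \<in> hom C A B \<Longrightarrow> mneg C f \<in> hom C A B"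
  using hom_abelian_group hom_Ob by blast

lemma madd_in_hom: "f \<in> hom C A B \<Longrightarrow> g \<in> hom C A B \<Longrightarrow> madd C f g \<in> hom C A B"
  using hom_abelian_group hom_Ob by blast

lemma madd_mneg: "f \<in> hom C A B \<Longrightarrow> madd C f (mneg C f) = mzero C A B"
  using hom_abelian_group hom_Ob by blast

lemma madd_mzero_right: "f \<in> hom C A B \<Longrightarrow> madd C f (mzero C A B) = f"
  using hom_abelian_group hom_Ob by blast

lemma madd_commute: "f \<in> hom C A B \<Longrightarrow> g \<in> hom C A B \<Longrightarrow> madd C f g = madd C g f"
  using hom_abelian_group hom_Ob by blast

lemma madd_assoc: "f \<in> hom C A B \<Longrightarrow> g \<in> hom C A B \<Longrightarrow> h \<in> hom C A B \<Longrightarrow>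
    madd C (madd C f g) h = madd C f (madd C g h)"
  using hom_abelian_group hom_Ob by blast

lemma madd_mzero_left: "f \<in> hom C A B \<Longrightarrow> madd C (mzero C A B) f = f"
  using madd_commute[OF mzero_in_hom] madd_mzero_right hom_Ob by metis

lemma cmp_madd_distrib_left: "f \<in> hom C A B \<Longrightarrow> g \<in> hom C A B \<Longrightarrow> h \<in> hom C B D \<Longrightarrow>
    cmp C h (madd C f g) = madd C (cmp C h f) (cmp C h g)"
  using preadditive hom_Ob unfolding is_preadditive_def by blast

lemma cmp_madd_distrib_right: "h \<in> hom C A B \<Longrightarrow> f \<in> hom C B D \<Longrightarrow> g \<in> hom C B D \<Longrightarrow>
    cmp C (madd C f g) h = madd C (cmp C f h) (cmp C g h)"
  using preadditive hom_Ob unfolding is_preadditive_def by blast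

lemma mneg_unique:
  assumes f: "f \<in> hom C A B" and g: "g \<in> hom C A B" and fg: "madd C f g = mzero C A B"
  shows "g = mneg C f"
proof -
  have nf: "mneg C f \<in> hom C A B" using f mneg_in_hom by blast
  have "g = madd C g (madd C f (mneg C f))" using f g madd_mneg madd_mzero_right by simp
  also have "\<dots> = madd C (madd C g f) (mneg C f)" using madd_assoc[OF g f nf] by simp
  also have "\<dots> = mneg C f" using madd_commute[OF g f] fg madd_mzero_left[OF nf] by simp
  finally show ?thesis .
qed

lemma mneg_mneg: assumes "f \<in> hom C A B" shows "mneg C (mneg C f) = f"
proof -
  have nf: "mneg C f \<in> hom C A B" using assms mneg_in_hom by blast
  have "madd C (mneg C f) f = mzero C A B" using madd_commute[OF nf assms] madd_mneg[OF assms] by simp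
  then show ?thesis using mneg_unique[OF nf assms] by simp
qed

lemma madd_mneg_eq_mzero_iff:
  assumes f: "f \<in> hom C A B" and g: "g \<in> hom C A B"
  shows "madd C f (mneg C g) = mzero C A B \<longleftrightarrow> f = g"
proof
  assume "madd C f (mneg C g) = mzero C A B"
  then have "mneg C g = mneg C f" using mneg_unique[OF f mneg_in_hom[OF g]] by simp
  then show "f = g" using mneg_mneg f g by metis
qed (use madd_mneg g in simp)

lemma madd_idem_imp_mzero:
  assumes f: "f \<in> hom C A B" and ff: "madd C f f = f"
  shows "f = mzero C A B"
proof -
  have nf: "mneg C f \<in> hom C A B" using f mneg_in_hom by blast
  have "f = madd C f (madd C f (mneg C f))" using f madd_mneg madd_mzero_right by simp
  also have "\<dots> = madd C (madd C f f) (mneg C f)" using madd_assoc[OF f f nf] by simp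
  also have "\<dots> = mzero C A B" using ff madd_mneg[OF f] by simp
  finally show ?thesis .
qed

lemma mneg_mzero: "A \<in> Ob C \<Longrightarrow> B \<in> Ob C \<Longrightarrow> mneg C (mzero C A B) = mzero C A B"
  using mneg_unique[OF mzero_in_hom mzero_in_hom] madd_mzero_right[OF mzero_in_hom] by metis

lemma cmp_mzero_right:
  assumes "h \<in> hom C B D" "A \<in> Ob C"
  shows "cmp C h (mzero C A B) = mzero C A D"
proof -
  have z: "mzero C A B \<in> hom C A B" using assms hom_Ob mzero_in_hom by blast
  then have "madd C (cmp C h (mzero C A B)) (cmp C h (mzero C A B)) = cmp C h (mzero C A B)"
    using cmp_madd_distrib_left[OF z z assms(1)] madd_mzero_right by simp
  then show ?thesis using madd_idem_imp_mzero cmp_in_hom[OF z assms(1)] by blast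
qed

lemma cmp_mzero_left:
  assumes "h \<in> hom C A B" "D \<in> Ob C"
  shows "cmp C (mzero C B D) h = mzero C A D"
proof -
  have z: "mzero C B D \<in> hom C B D" using assms hom_Ob mzero_in_hom by blast
  then have "madd C (cmp C (mzero C B D) h) (cmp C (mzero C B D) h) = cmp C (mzero C B D) h"
    using cmp_madd_distrib_right[OF assms(1) z z] madd_mzero_right by simp
  then show ?thesis using madd_idem_imp_mzero cmp_in_hom[OF assms(1) z] by blast
qed

lemma cmp_mneg_left:
  assumes "h \<in> hom C A B" "f \<in> hom C B D"
  shows "cmp C (mneg C f) h = mneg C (cmp C f h)"
proof -
  have "madd C (cmp C f h) (cmp C (mneg C f) h) = cmp C (madd C f (mneg C f)) h"
    using cmp_madd_distrib_right[OF assms(1,2) mneg_in_hom[OF assms(2)]] by simp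
  also have "\<dots> = mzero C A D" using assms madd_mneg cmp_mzero_left hom_Ob by simp
  finally show ?thesis using mneg_unique cmp_in_hom mneg_in_hom assms by blast
qed

lemma cmp_mneg_right:
  assumes "f \<in> hom C A B" "h \<in> hom C B D"
  shows "cmp C h (mneg C f) = mneg C (cmp C h f)"
proof -
  have "madd C (cmp C h f) (cmp C h (mneg C f)) = cmp C h (madd C f (mneg C f))"
    using cmp_madd_distrib_left[OF assms(1) mneg_in_hom[OF assms(1)] assms(2)] by simp
  also have "\<dots> = mzero C A D" using assms madd_mneg cmp_mzero_right hom_Ob by simp
  finally show ?thesis using mneg_unique cmp_in_hom mneg_in_hom assms by blast
qed

lemma is_iso_inverse:
  assumes "is_iso C f" "f \<in> hom C A B"
  obtains g where "g \<in> hom C B A" "cmp C g f = idm C A" "cmp C f g = idm C B"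
proof -
  have "mdom C f = A" "mcod C f = B" using assms(2) in_hom_iff by blast+
  then show ?thesis using assms(1) that unfolding is_iso_def by blast
qed

lemma is_isoI:
  assumes "f \<in> hom C A B" "g \<in> hom C B A" "cmp C g f = idm C A" "cmp C f g = idm C B"
  shows "is_iso C f"
proof -
  have "f \<in> Mor C" "mdom C f = A" "mcod C f = B" using assms(1) in_hom_iff by blast+
  then show ?thesis using assms(2-4) unfolding is_iso_def by blast
qed

lemma is_biprod_swap:
  assumes "is_biprod C A A' E i1 p1 i2 p2"
  shows "is_biprod C A' A E i2 p2 i1 p1"
proof -
  have "i1 \<in> hom C A E" "p1 \<in> hom C E A" "i2 \<in> hom C A' E" "p2 \<in> hom C E A'"
    using assms unfolding is_biprod_def by blast+
  then have "madd C (cmp C i2 p2) (cmp C i1 p1) = madd C (cmp C i1 p1) (cmp C i2 p2)"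
    using madd_commute cmp_in_hom by blast
  then show ?thesis using assms unfolding is_biprod_def by simp
qed

lemma is_biprod_summands:
  assumes "is_biprod C A A' E i1 p1 i2 p2"
  shows "is_summand C A E" "is_summand C A' E"
  using assms is_biprod_swap[OF assms] hom_Ob unfolding is_summand_def is_biprod_def by blast+

lemma is_biprod_cmp_transfer:
  assumes Y: "is_biprod C A B Y j1 q1 j2 q2"
    and k: "k1 \<in> hom C A W" "k2 \<in> hom C B W" and r: "r1 \<in> hom C W A" "r2 \<in> hom C W B"
  shows "cmp C (madd C (cmp C k1 q1) (cmp C k2 q2)) (madd C (cmp C j1 r1) (cmp C j2 r2))
       = madd C (cmp C k1 r1) (cmp C k2 r2)"
proof -
  have j: "j1 \<in> hom C A Y" "q1 \<in> hom C Y A" "j2 \<in> hom C B Y" "q2 \<in> hom C Y B"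
    and e: "cmp C q1 j1 = idm C A" "cmp C q2 j2 = idm C B"
      "cmp C q1 j2 = mzero C B A" "cmp C q2 j1 = mzero C A B"
    using Y unfolding is_biprod_def by blast+
  have O: "A \<in> Ob C" "B \<in> Ob C" "W \<in> Ob C" using k r hom_Ob by blast+
  have sandwich: "cmp C (cmp C k q) (cmp C j r) = cmp C k (cmp C (cmp C q j) r)"
    if "j \<in> hom C D Y" "q \<in> hom C Y D'" "k \<in> hom C D' W" "r \<in> hom C W D" for D D' j q k r
  proof -
    have "cmp C (cmp C k q) (cmp C j r) = cmp C k (cmp C q (cmp C j r))"
      using cmp_assoc[OF cmp_in_hom[OF that(4,1)] that(2,3)] by simp
    also have "\<dots> = cmp C k (cmp C (cmp C q j) r)" using cmp_assoc[OF that(4,1,2)] by simp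
    finally show ?thesis .
  qed
  have kq: "cmp C k1 q1 \<in> hom C Y W" "cmp C k2 q2 \<in> hom C Y W"
    and jr: "cmp C j1 r1 \<in> hom C W Y" "cmp C j2 r2 \<in> hom C W Y"
    using cmp_in_hom j k r by blast+
  have "cmp C (madd C (cmp C k1 q1) (cmp C k2 q2)) (madd C (cmp C j1 r1) (cmp C j2 r2))
      = madd C (madd C (cmp C (cmp C k1 q1) (cmp C j1 r1)) (cmp C (cmp C k1 q1) (cmp C j2 r2)))
               (madd C (cmp C (cmp C k2 q2) (cmp C j1 r1)) (cmp C (cmp C k2 q2) (cmp C j2 r2)))"
    using cmp_madd_distrib_right[OF madd_in_hom[OF jr] kq] cmp_madd_distrib_left[OF jr kq(1)]
      cmp_madd_distrib_left[OF jr kq(2)] by simp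
  also have "\<dots> = madd C (madd C (cmp C k1 r1) (mzero C W W)) (madd C (mzero C W W) (cmp C k2 r2))"
    using sandwich[OF j(1,2) k(1) r(1)] sandwich[OF j(3,2) k(1) r(2)]
      sandwich[OF j(1,4) k(2) r(1)] sandwich[OF j(3,4) k(2) r(2)]
      e cmp_idm_left r cmp_mzero_left[OF r(1)] cmp_mzero_left[OF r(2)] cmp_mzero_right[OF k(1)]
      cmp_mzero_right[OF k(2)] O by simp
  also have "\<dots> = madd C (cmp C k1 r1) (cmp C k2 r2)"
    using madd_mzero_left madd_mzero_right cmp_in_hom k r by simp
  finally show ?thesis .
qed

lemma is_biprod_iso:
  assumes E: "is_biprod C A B E i1 p1 i2 p2" and X: "is_biprod C A B X j1 q1 j2 q2"
  shows "is_iso C (madd C (cmp C j1 p1) (cmp C j2 p2))"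
proof (rule is_isoI)
  have h: "i1 \<in> hom C A E" "p1 \<in> hom C E A" "i2 \<in> hom C B E" "p2 \<in> hom C E B"
    "j1 \<in> hom C A X" "q1 \<in> hom C X A" "j2 \<in> hom C B X" "q2 \<in> hom C X B"
    and ids: "madd C (cmp C i1 p1) (cmp C i2 p2) = idm C E" "madd C (cmp C j1 q1) (cmp C j2 q2) = idm C X"
    using E X unfolding is_biprod_def by blast+
  show "madd C (cmp C j1 p1) (cmp C j2 p2) \<in> hom C E X"
    and "madd C (cmp C i1 q1) (cmp C i2 q2) \<in> hom C X E"
    using h madd_in_hom cmp_in_hom by blast+
  show "cmp C (madd C (cmp C i1 q1) (cmp C i2 q2)) (madd C (cmp C j1 p1) (cmp C j2 p2)) = idm C E"
    using is_biprod_cmp_transfer[OF X h(1,3,2,4)] ids by simp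
  show "cmp C (madd C (cmp C j1 p1) (cmp C j2 p2)) (madd C (cmp C i1 q1) (cmp C i2 q2)) = idm C X"
    using is_biprod_cmp_transfer[OF E h(5,7,6,8)] ids by simp
qed

end

locale additive_category =
  fixes C :: "('o,'m,'x) mdc_scheme"
  assumes additive: "is_additive C"

sublocale additive_category \<subseteq> preadditive_category
  using additive unfolding is_additive_def by unfold_locales blast+

context additive_category
begin

lemma zero_obj_exists: obtains Z where "is_zero_obj C Z"
  using additive unfolding is_additive_def by blast

lemma biprod_exists:
  assumes "A \<in> Ob C" "B \<in> Ob C"
  obtains E i1 p1 i2 p2 where "E \<in> Ob C" "is_biprod C A B E i1 p1 i2 p2"
  using additive assms unfolding is_additive_def by blast

lemma is_iso_imp_summand:
  assumes f: "f \<in> hom C A B" and iso: "is_iso C f"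
  shows "is_summand C A B"
proof -
  obtain g where g: "g \<in> hom C B A" "cmp C g f = idm C A" "cmp C f g = idm C B"
    using is_iso_inverse[OF iso f] .
  obtain Z where Z: "is_zero_obj C Z" using zero_obj_exists .
  have O: "A \<in> Ob C" "B \<in> Ob C" "Z \<in> Ob C" using f hom_Ob Z unfolding is_zero_obj_def by blast+
  have "is_biprod C A Z B f g (mzero C Z B) (mzero C B Z)"
    unfolding is_biprod_def
  proof (intro conjI)
    show "cmp C (mzero C B Z) (mzero C Z B) = idm C Z"
      using Z cmp_mzero_left[OF mzero_in_hom] O unfolding is_zero_obj_def by simp
    show "madd C (cmp C f g) (cmp C (mzero C Z B) (mzero C B Z)) = idm C B"
      using g(3) cmp_mzero_left[OF mzero_in_hom] madd_mzero_right[OF idm_in_hom] O by simp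
  qed (use f g O mzero_in_hom cmp_mzero_left cmp_mzero_right in simp_all)
  then show ?thesis using is_biprod_summands by blast
qed

end

definition additive_functor :: "('o,'m,'x) mdc_scheme \<Rightarrow> ('o \<Rightarrow> 'o) \<Rightarrow> ('m \<Rightarrow> 'm) \<Rightarrow> bool" where
  "additive_functor C FO FM \<longleftrightarrow>
     (\<forall>A\<in>Ob C. FO A \<in> Ob C) \<and>
     (\<forall>A B f. f \<in> hom C A B \<longrightarrow> FM f \<in> hom C (FO A) (FO B)) \<and>
     (\<forall>A\<in>Ob C. FM (idm C A) = idm C (FO A)) \<and>
     (\<forall>A B D f g. f \<in> hom C A B \<longrightarrow> g \<in> hom C B D \<longrightarrow> FM (cmp C g f) = cmp C (FM g) (FM f)) \<and>
     (\<forall>A B f g. f \<in> hom C A B \<longrightarrow> g \<in> hom C A B \<longrightarrow> FM (madd C f g) = madd C (FM f) (FM g))"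

context preadditive_category
begin

context
  fixes FO FM
  assumes F: "additive_functor C FO FM"
begin

lemma additive_functor_Ob: "A \<in> Ob C \<Longrightarrow> FO A \<in> Ob C"
  using F unfolding additive_functor_def by blast

lemma additive_functor_hom: "f \<in> hom C A B \<Longrightarrow> FM f \<in> hom C (FO A) (FO B)"
  using F unfolding additive_functor_def by blast

lemma additive_functor_idm: "A \<in> Ob C \<Longrightarrow> FM (idm C A) = idm C (FO A)"
  using F unfolding additive_functor_def by blast

lemma additive_functor_cmp:
  "f \<in> hom C A B \<Longrightarrow> g \<in> hom C B D \<Longrightarrow> FM (cmp C g f) = cmp C (FM g) (FM f)"
  using F unfolding additive_functor_def by blast

lemma additive_functor_madd:
  "f \<in> hom C A B \<Longrightarrow> g \<in> hom C A B \<Longrightarrow> FM (madd C f g) = madd C (FM f) (FM g)"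
  using F unfolding additive_functor_def by blast

lemma additive_functor_mzero:
  assumes "A \<in> Ob C" "B \<in> Ob C"
  shows "FM (mzero C A B) = mzero C (FO A) (FO B)"
proof -
  have z: "mzero C A B \<in> hom C A B" using mzero_in_hom assms by blast
  have "madd C (FM (mzero C A B)) (FM (mzero C A B)) = FM (mzero C A B)"
    using additive_functor_madd[OF z z] madd_mzero_right[OF z] by simp
  then show ?thesis using madd_idem_imp_mzero additive_functor_hom[OF z] by blast
qed

lemma additive_functor_zero_obj:
  assumes "is_zero_obj C Z"
  shows "is_zero_obj C (FO Z)"
proof -
  have Z: "Z \<in> Ob C" "idm C Z = mzero C Z Z" using assms unfolding is_zero_obj_def by blast+
  then have "idm C (FO Z) = mzero C (FO Z) (FO Z)"
    using additive_functor_idm[OF Z(1)] additive_functor_mzero[OF Z(1) Z(1)] by simp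
  then show ?thesis using additive_functor_Ob[OF Z(1)] unfolding is_zero_obj_def by blast
qed

lemma additive_functor_iso:
  assumes f: "f \<in> hom C A B" and iso: "is_iso C f"
  shows "is_iso C (FM f)"
proof -
  obtain g where g: "g \<in> hom C B A" "cmp C g f = idm C A" "cmp C f g = idm C B"
    using is_iso_inverse[OF iso f] .
  show ?thesis
    using is_isoI[OF additive_functor_hom[OF f] additive_functor_hom[OF g(1)]]
      additive_functor_cmp[OF f g(1)] additive_functor_cmp[OF g(1) f] g(2,3)
      additive_functor_idm hom_Ob[OF f] by simp
qed

lemma additive_functor_biprod:
  assumes bp: "is_biprod C A A' E i1 p1 i2 p2"
  shows "is_biprod C (FO A) (FO A') (FO E) (FM i1) (FM p1) (FM i2) (FM p2)"
proof -
  have h: "i1 \<in> hom C A E" "p1 \<in> hom C E A" "i2 \<in> hom C A' E" "p2 \<in> hom C E A'"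
    and e: "cmp C p1 i1 = idm C A" "cmp C p2 i2 = idm C A'"
      "cmp C p1 i2 = mzero C A' A" "cmp C p2 i1 = mzero C A A'"
      "madd C (cmp C i1 p1) (cmp C i2 p2) = idm C E"
    using bp unfolding is_biprod_def by blast+
  have O: "A \<in> Ob C" "A' \<in> Ob C" "E \<in> Ob C" using h hom_Ob by blast+
  have "FM (madd C (cmp C i1 p1) (cmp C i2 p2)) = madd C (cmp C (FM i1) (FM p1)) (cmp C (FM i2) (FM p2))"
    using additive_functor_madd[OF cmp_in_hom[OF h(2,1)] cmp_in_hom[OF h(4,3)]]
      additive_functor_cmp[OF h(2,1)] additive_functor_cmp[OF h(4,3)] by simp
  then show ?thesis
    unfolding is_biprod_def
    using additive_functor_hom[OF h(1)] additive_functor_hom[OF h(2)] additive_functor_hom[OF h(3)]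
      additive_functor_hom[OF h(4)] additive_functor_cmp[OF h(1,2)] additive_functor_cmp[OF h(3,4)]
      additive_functor_cmp[OF h(3,2)] additive_functor_cmp[OF h(1,4)] e
      additive_functor_idm additive_functor_mzero O by simp
qed

end

end

section \<open>Triangulated categories\<close>

locale triangulated_category =
  fixes C :: "('o,'m,'x) mdc_scheme"
  assumes triangulated: "is_triangulated C"

sublocale triangulated_category \<subseteq> additive_category
  using triangulated unfolding is_triangulated_def by unfold_locales blast

context triangulated_category
begin

lemma shift_additive_functor: "additive_functor C (shO C) (shM C)"
proof -
  have bij: "bij_betw (shO C) (Ob C) (Ob C)"
    using triangulated unfolding is_triangulated_def by (elim conjE)
  have hom: "\<forall>A\<in>Ob C. \<forall>B\<in>Ob C. bij_betw (shM C) (hom C A B) (hom C (shO C A) (shO C B))"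
    using triangulated unfolding is_triangulated_def by (elim conjE)
  have idm: "\<forall>A\<in>Ob C. shM C (idm C A) = idm C (shO C A)"
    using triangulated unfolding is_triangulated_def by (elim conjE)
  have cmp: "\<forall>f\<in>Mor C. \<forall>g\<in>Mor C. mcod C f = mdom C g \<longrightarrow> shM C (cmp C g f) = cmp C (shM C g) (shM C f)"
    using triangulated unfolding is_triangulated_def by (elim conjE)
  have add: "\<forall>A\<in>Ob C. \<forall>B\<in>Ob C. \<forall>f\<in>hom C A B. \<forall>g\<in>hom C A B.
                shM C (madd C f g) = madd C (shM C f) (shM C g)"
    using triangulated unfolding is_triangulated_def by (elim conjE)
  show ?thesis
    unfolding additive_functor_def
  proof (intro conjI allI impI ballI)
    show "shO C A \<in> Ob C" if "A \<in> Ob C" for A using bij that bij_betwE by blast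
    show "shM C f \<in> hom C (shO C A) (shO C B)" if "f \<in> hom C A B" for A B f
      using hom hom_Ob[OF that] that bij_betwE by blast
    show "shM C (cmp C g f) = cmp C (shM C g) (shM C f)" if "f \<in> hom C A B" "g \<in> hom C B D"
      for A B D f g using cmp that unfolding in_hom_iff by auto
    show "shM C (madd C f g) = madd C (shM C f) (shM C g)" if "f \<in> hom C A B" "g \<in> hom C A B"
      for A B f g using add hom_Ob[OF that(1)] that by blast
  qed (use idm in blast)
qed

lemma shO_surj:
  assumes "B \<in> Ob C"
  shows "\<exists>A\<in>Ob C. shO C A = B"
proof -
  have "shO C ` Ob C = Ob C"
    using triangulated unfolding is_triangulated_def bij_betw_def by (elim conjE)
  then show ?thesis using assms by (metis imageE)
qed

lemma shM_bij: "A \<in> Ob C \<Longrightarrow> B \<in> Ob C \<Longrightarrow> bij_betw (shM C) (hom C A B) (hom C (shO C A) (shO C B))"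
  using triangulated unfolding is_triangulated_def by (elim conjE) blast

lemmas shO_Ob = additive_functor_Ob[OF shift_additive_functor]
  and shM_hom = additive_functor_hom[OF shift_additive_functor]
  and shM_idm = additive_functor_idm[OF shift_additive_functor]
  and shM_cmp = additive_functor_cmp[OF shift_additive_functor]
  and shM_mzero = additive_functor_mzero[OF shift_additive_functor]

lemma dist_is_triangle:
  assumes "(f,g,h) \<in> Dist C"
  shows "is_triangle C (f,g,h)"
proof -
  have "\<forall>t\<in>Dist C. is_triangle C t" using triangulated unfolding is_triangulated_def by (elim conjE)
  then show ?thesis using assms by blast
qed

lemma dist_in_hom:
  assumes d: "(f,g,h) \<in> Dist C" and f: "f \<in> hom C X Y" and g: "g \<in> hom C Y Z"
  shows "h \<in> hom C Z (shO C X)"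
  using dist_is_triangle[OF d] f g unfolding is_triangle_def in_hom_iff by auto

lemma dist_homE:
  assumes "(f,g,h) \<in> Dist C"
  obtains X Y Z where "f \<in> hom C X Y" "g \<in> hom C Y Z" "h \<in> hom C Z (shO C X)"
  using dist_is_triangle[OF assms] that unfolding is_triangle_def in_hom_iff by auto

lemma dist_rotate_iff:
  assumes "is_triangle C (f,g,h)"
  shows "(f,g,h) \<in> Dist C \<longleftrightarrow> (g, h, mneg C (shM C f)) \<in> Dist C"
proof -
  have "\<forall>f g h. is_triangle C (f,g,h) \<longrightarrow> ((f,g,h) \<in> Dist C \<longleftrightarrow> (g, h, mneg C (shM C f)) \<in> Dist C)"
    using triangulated unfolding is_triangulated_def by (elim conjE)
  then show ?thesis using assms by blast
qed

lemma dist_rotate: "(f,g,h) \<in> Dist C \<Longrightarrow> (g, h, mneg C (shM C f)) \<in> Dist C"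
  using dist_rotate_iff dist_is_triangle by blast

lemma dist_trivial:
  assumes "X \<in> Ob C" "is_zero_obj C Z"
  shows "(idm C X, mzero C X Z, mzero C Z (shO C X)) \<in> Dist C"
proof -
  have "\<forall>X\<in>Ob C. \<forall>Z. is_zero_obj C Z \<longrightarrow> (idm C X, mzero C X Z, mzero C Z (shO C X)) \<in> Dist C"
    using triangulated unfolding is_triangulated_def by (elim conjE)
  then show ?thesis using assms by blast
qed

lemma dist_exists:
  assumes "f \<in> hom C X Y"
  obtains g h where "(f,g,h) \<in> Dist C"
proof -
  have "\<forall>f\<in>Mor C. \<exists>g h. (f,g,h) \<in> Dist C"
    using triangulated unfolding is_triangulated_def by (elim conjE)
  then show ?thesis using assms that unfolding in_hom_iff by blast
qed

lemma dist_morphism_exists: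
  assumes d: "(f,g,h) \<in> Dist C" and d': "(f',g',h') \<in> Dist C"
    and f: "f \<in> hom C X Y" and g: "g \<in> hom C Y Z" and f': "f' \<in> hom C X' Y'" and g': "g' \<in> hom C Y' Z'"
    and a: "a \<in> hom C X X'" and b: "b \<in> hom C Y Y'" and sq: "cmp C b f = cmp C f' a"
  obtains c where "c \<in> hom C Z Z'" "cmp C c g = cmp C g' b" "cmp C (shM C a) h = cmp C h' c"
proof -
  have TR3: "\<forall>f g h f' g' h' a b. (f,g,h) \<in> Dist C \<and> (f',g',h') \<in> Dist C \<and>
      a \<in> hom C (mdom C f) (mdom C f') \<and> b \<in> hom C (mdom C g) (mdom C g') \<and>
      cmp C b f = cmp C f' a \<longrightarrow> (\<exists>c. is_tri_mor C (f,g,h) (f',g',h') (a,b,c))"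
    using triangulated unfolding is_triangulated_def by (elim conjE)
  have "mdom C f = X" "mdom C g = Y" "mdom C f' = X'" "mdom C g' = Y'"
    using f g f' g' in_hom_iff by blast+
  then obtain c where "is_tri_mor C (f,g,h) (f',g',h') (a,b,c)"
    using TR3 d d' a b sq by metis
  moreover have "mdom C h = Z" "mdom C h' = Z'"
    using dist_in_hom[OF d f g] dist_in_hom[OF d' f' g'] in_hom_iff by blast+
  ultimately show ?thesis using that unfolding is_tri_mor_def by auto
qed

lemma dist_cmp_zero:
  assumes d: "(f,g,h) \<in> Dist C" and f: "f \<in> hom C X Y" and g: "g \<in> hom C Y Z"
  shows "cmp C g f = mzero C X Z"
proof -
  obtain Z0 where Z0: "is_zero_obj C Z0" using zero_obj_exists .
  have O: "X \<in> Ob C" "Z0 \<in> Ob C" using f hom_Ob Z0 unfolding is_zero_obj_def by blast+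
  obtain c where c: "c \<in> hom C Z0 Z" "cmp C c (mzero C X Z0) = cmp C g f"
    using dist_morphism_exists[OF dist_trivial[OF O(1) Z0] d idm_in_hom[OF O(1)] mzero_in_hom[OF O]
        f g idm_in_hom[OF O(1)] f refl] by blast
  then show ?thesis using cmp_mzero_right[OF c(1) O(1)] by simp
qed

text \<open>Both lemmas apply TR3 between the given triangle and a rotation of a trivial triangle; the lift is
  then obtained by desuspending.\<close>

lemma dist_lift:
  assumes d: "(f,g,h) \<in> Dist C" and f: "f \<in> hom C X Y" and g: "g \<in> hom C Y Z"
    and y: "y \<in> hom C W Y" and gy: "cmp C g y = mzero C W Z"
  obtains x where "x \<in> hom C W X" "cmp C f x = y"
proof -
  have h: "h \<in> hom C Z (shO C X)" using dist_in_hom[OF d f g] .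
  have O: "X \<in> Ob C" "Y \<in> Ob C" "Z \<in> Ob C" "W \<in> Ob C" using f g y hom_Ob by blast+
  obtain Z0 where Z0: "is_zero_obj C Z0" using zero_obj_exists .
  have Z0O: "Z0 \<in> Ob C" using Z0 unfolding is_zero_obj_def by blast
  have shf: "shM C f \<in> hom C (shO C X) (shO C Y)" using shM_hom[OF f] .
  have shy: "shM C y \<in> hom C (shO C W) (shO C Y)" using shM_hom[OF y] .
  have sq: "cmp C (mzero C Z0 Z) (mzero C W Z0) = cmp C g y"
    using gy cmp_mzero_left[OF mzero_in_hom[OF O(4) Z0O] O(3)] by simp
  obtain c where c: "c \<in> hom C (shO C W) (shO C X)"
      "cmp C (shM C y) (mneg C (shM C (idm C W))) = cmp C (mneg C (shM C f)) c"
    using dist_morphism_exists[OF dist_rotate[OF dist_trivial[OF O(4) Z0]] dist_rotate[OF d]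
        mzero_in_hom[OF O(4) Z0O] mzero_in_hom[OF Z0O shO_Ob[OF O(4)]] g h y mzero_in_hom[OF Z0O O(3)] sq]
    by blast
  have "mneg C (shM C y) = mneg C (cmp C (shM C f) c)"
    using c(2) cmp_mneg_right[OF idm_in_hom[OF shO_Ob[OF O(4)]] shy] cmp_idm_right[OF shy]
      cmp_mneg_left[OF c(1) shf] shM_idm[OF O(4)] by simp
  then have shy_eq: "shM C y = cmp C (shM C f) c"
    using mneg_mneg[OF shy] mneg_mneg[OF cmp_in_hom[OF c(1) shf]] by metis
  obtain x where x: "x \<in> hom C W X" "shM C x = c"
    using c(1) bij_betw_imp_surj_on[OF shM_bij[OF O(4,1)]] by (metis imageE)
  have "shM C y = shM C (cmp C f x)" using shy_eq shM_cmp[OF x(1) f] x(2) by simp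
  then have "y = cmp C f x"
    using inj_onD[OF bij_betw_imp_inj_on[OF shM_bij[OF O(4,2)]]] y cmp_in_hom[OF x(1) f] by blast
  then show ?thesis using that x(1) by blast
qed

lemma dist_extend:
  assumes d: "(f,g,h) \<in> Dist C" and f: "f \<in> hom C X Y" and g: "g \<in> hom C Y Z"
    and y: "y \<in> hom C Y W" and yf: "cmp C y f = mzero C X W"
  obtains z where "z \<in> hom C Z W" "cmp C z g = y"
proof -
  have O: "X \<in> Ob C" "W \<in> Ob C" using f y hom_Ob by blast+
  obtain Z0 where Z0: "is_zero_obj C Z0" using zero_obj_exists .
  have Z0O: "Z0 \<in> Ob C" "shO C Z0 \<in> Ob C" using Z0 shO_Ob unfolding is_zero_obj_def by blast+
  have "mneg C (shM C (mzero C Z0 W)) = mzero C (shO C Z0) (shO C W)"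
    using shM_mzero[OF Z0O(1) O(2)] mneg_mzero shO_Ob Z0O O by simp
  then have "(idm C W, mzero C W (shO C Z0), mneg C (shM C (mzero C Z0 W))) \<in> Dist C"
    using dist_trivial[OF O(2) additive_functor_zero_obj[OF shift_additive_functor Z0]] by simp
  moreover have "is_triangle C (mzero C Z0 W, idm C W, mzero C W (shO C Z0))"
    using mzero_in_hom[OF Z0O(1) O(2)] mzero_in_hom[OF O(2) Z0O(2)] idm_in_hom[OF O(2)]
    unfolding is_triangle_def in_hom_iff by auto
  ultimately have t: "(mzero C Z0 W, idm C W, mzero C W (shO C Z0)) \<in> Dist C"
    using dist_rotate_iff by blast
  have sq: "cmp C y f = cmp C (mzero C Z0 W) (mzero C X Z0)"
    using yf cmp_mzero_right[OF mzero_in_hom[OF Z0O(1) O(2)] O(1)] by simp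
  obtain c where "c \<in> hom C Z W" "cmp C c g = cmp C (idm C W) y"
    using dist_morphism_exists[OF d t f g mzero_in_hom[OF Z0O(1) O(2)] idm_in_hom[OF O(2)]
        mzero_in_hom[OF O(1) Z0O(1)] y sq] by blast
  then show ?thesis using that cmp_idm_left[OF y] by simp
qed

lemma thick_subset: "thick C S \<Longrightarrow> S \<subseteq> Ob C"
  unfolding thick_def by blast

lemma thick_shO_iff: "thick C S \<Longrightarrow> A \<in> Ob C \<Longrightarrow> shO C A \<in> S \<longleftrightarrow> A \<in> S"
  unfolding thick_def by blast

lemma thick_cone: "thick C S \<Longrightarrow> (f,g,h) \<in> Dist C \<Longrightarrow> mdom C f \<in> S \<Longrightarrow> mdom C g \<in> S \<Longrightarrow> mcod C g \<in> S"
  unfolding thick_def by blast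

lemma thick_summand: "thick C S \<Longrightarrow> is_summand C A B \<Longrightarrow> B \<in> S \<Longrightarrow> A \<in> S"
  unfolding thick_def by blast

lemma thick_iso_iff:
  assumes S: "thick C S" and f: "f \<in> hom C A B" and iso: "is_iso C f"
  shows "A \<in> S \<longleftrightarrow> B \<in> S"
proof -
  obtain g where g: "g \<in> hom C B A" "cmp C g f = idm C A" "cmp C f g = idm C B"
    using is_iso_inverse[OF iso f] .
  have "is_iso C g" using is_isoI[OF g(1) f g(3,2)] .
  then show ?thesis using thick_summand[OF S] is_iso_imp_summand f g(1) iso by blast
qed

lemma thick_zero_obj:
  assumes S: "thick C S" and Z': "is_zero_obj C Z'"
  shows "Z' \<in> S"
proof -
  obtain Z where Z: "Z \<in> S" "is_zero_obj C Z" using S unfolding thick_def by blast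
  have O: "Z \<in> Ob C" "Z' \<in> Ob C" using Z Z' unfolding is_zero_obj_def by blast+
  have z: "mzero C Z' Z \<in> hom C Z' Z" "mzero C Z Z' \<in> hom C Z Z'" using mzero_in_hom O by blast+
  have "cmp C (mzero C Z Z') (mzero C Z' Z) = idm C Z'"
    using cmp_mzero_left[OF z(1) O(2)] Z' unfolding is_zero_obj_def by simp
  moreover have "cmp C (mzero C Z' Z) (mzero C Z Z') = idm C Z"
    using cmp_mzero_left[OF z(2) O(1)] Z(2) unfolding is_zero_obj_def by simp
  ultimately have "is_iso C (mzero C Z' Z)" using is_isoI[OF z] by blast
  then show ?thesis using thick_iso_iff[OF S z(1)] Z(1) by blast
qed

lemma dist_cod_Ob:
  assumes "(f,g,h) \<in> Dist C"
  shows "mcod C g \<in> Ob C"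
proof -
  obtain X Y Z where "f \<in> hom C X Y" "g \<in> hom C Y Z" "h \<in> hom C Z (shO C X)"
    using dist_homE[OF assms] .
  then have "mcod C g = Z" "Z \<in> Ob C" using hom_Ob in_hom_iff by blast+
  then show ?thesis by simp
qed

lemma thick_Ob: "thick C (Ob C)"
  unfolding thick_def
proof (intro conjI)
  obtain Z where "is_zero_obj C Z" using zero_obj_exists .
  then show "\<exists>Z\<in>Ob C. is_zero_obj C Z" unfolding is_zero_obj_def by blast
  show "\<forall>A\<in>Ob C. shO C A \<in> Ob C \<longleftrightarrow> A \<in> Ob C" using shO_Ob by blast
  show "\<forall>f g h. (f,g,h) \<in> Dist C \<and> mdom C f \<in> Ob C \<and> mdom C g \<in> Ob C \<longrightarrow> mcod C g \<in> Ob C"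
    using dist_cod_Ob by blast
  show "\<forall>A B. is_summand C A B \<and> B \<in> Ob C \<longrightarrow> A \<in> Ob C" unfolding is_summand_def by blast
qed simp

lemma thick_Inter:
  assumes T: "\<forall>T\<in>\<T>. thick C T"
  shows "thick C (Ob C \<inter> \<Inter>\<T>)"
  unfolding thick_def
proof (intro conjI)
  show "Ob C \<inter> \<Inter>\<T> \<subseteq> Ob C" by blast
  obtain Z where Z: "is_zero_obj C Z" using zero_obj_exists .
  then have "Z \<in> Ob C \<inter> \<Inter>\<T>" using thick_zero_obj T unfolding is_zero_obj_def by blast
  then show "\<exists>Z\<in>Ob C \<inter> \<Inter>\<T>. is_zero_obj C Z" using Z by blast
  show "\<forall>A\<in>Ob C. shO C A \<in> Ob C \<inter> \<Inter>\<T> \<longleftrightarrow> A \<in> Ob C \<inter> \<Inter>\<T>"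
  proof
    fix A assume A: "A \<in> Ob C"
    have "\<forall>T\<in>\<T>. shO C A \<in> T \<longleftrightarrow> A \<in> T" using thick_shO_iff T A by blast
    then show "shO C A \<in> Ob C \<inter> \<Inter>\<T> \<longleftrightarrow> A \<in> Ob C \<inter> \<Inter>\<T>" using A shO_Ob by blast
  qed
  show "\<forall>f g h. (f,g,h) \<in> Dist C \<and> mdom C f \<in> Ob C \<inter> \<Inter>\<T> \<and> mdom C g \<in> Ob C \<inter> \<Inter>\<T>
      \<longrightarrow> mcod C g \<in> Ob C \<inter> \<Inter>\<T>"
  proof (intro allI impI)
    fix f g h assume a: "(f,g,h) \<in> Dist C \<and> mdom C f \<in> Ob C \<inter> \<Inter>\<T> \<and> mdom C g \<in> Ob C \<inter> \<Inter>\<T>"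
    have "mcod C g \<in> T" if "T \<in> \<T>" for T
      using thick_cone[of T f g h] T a that by blast
    then show "mcod C g \<in> Ob C \<inter> \<Inter>\<T>" using dist_cod_Ob a by blast
  qed
  show "\<forall>A B. is_summand C A B \<and> B \<in> Ob C \<inter> \<Inter>\<T> \<longrightarrow> A \<in> Ob C \<inter> \<Inter>\<T>"
  proof (intro allI impI)
    fix A B assume a: "is_summand C A B \<and> B \<in> Ob C \<inter> \<Inter>\<T>"
    have "A \<in> T" if "T \<in> \<T>" for T
      using thick_summand[of T A B] T a that by blast
    then show "A \<in> Ob C \<inter> \<Inter>\<T>" using a unfolding is_summand_def by blast
  qed
qed

text \<open>The defect 1 - (g r + s h) kills g, hence factors through h, and then it vanishes because it kills s.\<close>
lemma dist_split_biprod: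
  assumes d: "(f,g,h) \<in> Dist C" and g: "g \<in> hom C A X" and h: "h \<in> hom C X B"
    and r: "r \<in> hom C X A" and s: "s \<in> hom C B X"
    and rg: "cmp C r g = idm C A" and hs: "cmp C h s = idm C B"
    and rs: "cmp C r s = mzero C B A" and hg: "cmp C h g = mzero C A B"
  shows "is_biprod C A B X g r s h"
proof -
  have O: "A \<in> Ob C" "B \<in> Ob C" "X \<in> Ob C" using g h hom_Ob by blast+
  define w where "w = madd C (cmp C g r) (cmp C s h)"
  define \<theta> where "\<theta> = madd C (idm C X) (mneg C w)"
  have w: "w \<in> hom C X X" unfolding w_def using madd_in_hom cmp_in_hom g h r s by blast
  have \<theta>: "\<theta> \<in> hom C X X" unfolding \<theta>_def using madd_in_hom idm_in_hom mneg_in_hom w O by blast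
  have cmp_\<theta>: "cmp C \<theta> k = madd C k (mneg C (madd C (cmp C g (cmp C r k)) (cmp C s (cmp C h k))))"
    if k: "k \<in> hom C D X" for D k
  proof -
    have "cmp C w k = madd C (cmp C g (cmp C r k)) (cmp C s (cmp C h k))"
      unfolding w_def using cmp_madd_distrib_right[OF k cmp_in_hom[OF r g] cmp_in_hom[OF h s]]
        cmp_assoc[OF k r g] cmp_assoc[OF k h s] by simp
    then show ?thesis
      unfolding \<theta>_def using cmp_madd_distrib_right[OF k idm_in_hom[OF O(3)] mneg_in_hom[OF w]]
        cmp_idm_left[OF k] cmp_mneg_left[OF k w] by simp
  qed
  have "cmp C \<theta> g = mzero C A X"
    using cmp_\<theta>[OF g] rg hg cmp_idm_right[OF g] cmp_mzero_right[OF s O(1)]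
      madd_mzero_right g madd_mneg by simp
  then obtain t where t: "t \<in> hom C B X" "cmp C t h = \<theta>"
    using dist_extend[OF dist_rotate[OF d] g h \<theta>] by blast
  have "t = cmp C \<theta> s" using t cmp_assoc[OF s h t(1)] hs cmp_idm_right[OF t(1)] by simp
  also have "\<dots> = mzero C B X"
    using cmp_\<theta>[OF s] rs hs cmp_idm_right[OF s] cmp_mzero_right[OF g O(2)]
      madd_mzero_left s madd_mneg by simp
  finally have "\<theta> = mzero C X X" using t(2) cmp_mzero_left[OF h O(3)] by simp
  then have "w = idm C X" using madd_mneg_eq_mzero_iff[OF idm_in_hom[OF O(3)] w] unfolding \<theta>_def by simp
  then have "madd C (cmp C g r) (cmp C s h) = idm C X" unfolding w_def .
  then show ?thesis unfolding is_biprod_def using g h r s rg hs rs hg by (intro conjI)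
qed

lemma dist_zero_map_biprod:
  assumes A: "A \<in> Ob C" and B': "B' \<in> Ob C" and d: "(mzero C B' A, g, h) \<in> Dist C"
  obtains X r s where "is_biprod C A (shO C B') X g r s h"
proof -
  have u: "mzero C B' A \<in> hom C B' A" using mzero_in_hom A B' by blast
  obtain X where g: "g \<in> hom C A X"
    using dist_homE[OF d] u unfolding in_hom_iff by metis
  have h: "h \<in> hom C X (shO C B')" using dist_in_hom[OF d u g] .
  have O: "shO C A \<in> Ob C" "shO C B' \<in> Ob C" "X \<in> Ob C" using shO_Ob A B' g hom_Ob by blast+
  have "mneg C (shM C (mzero C B' A)) = mzero C (shO C B') (shO C A)"
    using shM_mzero[OF B' A] mneg_mzero O by simp
  then have d2: "(g, h, mzero C (shO C B') (shO C A)) \<in> Dist C" using dist_rotate[OF d] by simp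
  have hg: "cmp C h g = mzero C A (shO C B')" using dist_cmp_zero[OF d2 g h] .
  obtain s where s: "s \<in> hom C (shO C B') X" "cmp C h s = idm C (shO C B')"
    using dist_lift[OF dist_rotate[OF d2] h mzero_in_hom[OF O(2,1)] idm_in_hom[OF O(2)]]
      cmp_mzero_left[OF idm_in_hom[OF O(2)] O(1)] by blast
  obtain r where r: "r \<in> hom C X A" "cmp C r g = idm C A"
    using dist_extend[OF d u g idm_in_hom[OF A]] cmp_idm_left[OF u] by blast
  define r' where "r' = madd C r (mneg C (cmp C r (cmp C s h)))"
  have rsh: "cmp C r (cmp C s h) \<in> hom C X A" using cmp_in_hom h s(1) r(1) by blast
  have r': "r' \<in> hom C X A" unfolding r'_def using madd_in_hom mneg_in_hom r(1) rsh by blast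
  have "cmp C (cmp C r (cmp C s h)) g = mzero C A A"
    using cmp_assoc[OF g cmp_in_hom[OF h s(1)] r(1)] cmp_assoc[OF g h s(1)] hg
      cmp_mzero_right[OF s(1) A] cmp_mzero_right[OF r(1) A] by simp
  then have r'g: "cmp C r' g = idm C A"
    unfolding r'_def using cmp_madd_distrib_right[OF g r(1) mneg_in_hom[OF rsh]] cmp_mneg_left[OF g rsh]
      r(2) mneg_mzero[OF A A] madd_mzero_right[OF idm_in_hom[OF A]] by simp
  have "cmp C (cmp C r (cmp C s h)) s = cmp C r s"
    using cmp_assoc[OF s(1) cmp_in_hom[OF h s(1)] r(1)] cmp_assoc[OF s(1) h s(1)] s(2)
      cmp_idm_right[OF s(1)] by simp
  then have r's: "cmp C r' s = mzero C (shO C B') A"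
    unfolding r'_def using cmp_madd_distrib_right[OF s(1) r(1) mneg_in_hom[OF rsh]]
      cmp_mneg_left[OF s(1) rsh] madd_mneg[OF cmp_in_hom[OF s(1) r(1)]] by simp
  show ?thesis using that dist_split_biprod[OF d g h r' s(1) r'g s(2) r's hg] .
qed

lemma thick_biprod:
  assumes S: "thick C S" and AS: "A \<in> S" and BS: "B \<in> S" and E: "is_biprod C A B E i1 p1 i2 p2"
  shows "E \<in> S"
proof -
  have A: "A \<in> Ob C" and B: "B \<in> Ob C" using thick_subset[OF S] AS BS by blast+
  obtain B' where B': "B' \<in> Ob C" "shO C B' = B" using shO_surj[OF B] by blast
  obtain g h where d: "(mzero C B' A, g, h) \<in> Dist C" using dist_exists[OF mzero_in_hom[OF B'(1) A]] .
  obtain X r s where X: "is_biprod C A B X g r s h"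
    using dist_zero_map_biprod[OF A B'(1) d] B'(2) by blast
  have "mdom C (mzero C B' A) = B'" "mdom C g = A" "mcod C g = X"
    using X mzero_in_hom[OF B'(1) A] unfolding is_biprod_def in_hom_iff by blast+
  then have "X \<in> S"
    using thick_cone[OF S d] thick_shO_iff[OF S B'(1)] B'(2) AS BS by simp
  moreover have "madd C (cmp C g p1) (cmp C s p2) \<in> hom C E X"
    using E X madd_in_hom cmp_in_hom unfolding is_biprod_def by blast
  ultimately show ?thesis using thick_iso_iff[OF S] is_biprod_iso[OF E X] by blast
qed

lemma thick_biprod_iff:
  assumes S: "thick C S" and E: "is_biprod C A B E i1 p1 i2 p2"
  shows "E \<in> S \<longleftrightarrow> A \<in> S \<and> B \<in> S"
  using thick_biprod[OF S _ _ E] thick_summand[OF S] is_biprod_summands[OF E] by blast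

definition exact_functor :: "('o \<Rightarrow> 'o) \<Rightarrow> ('m \<Rightarrow> 'm) \<Rightarrow> bool" where
  "exact_functor FO FM \<longleftrightarrow> additive_functor C FO FM \<and>
     (\<forall>A\<in>Ob C. \<exists>\<phi>. \<phi> \<in> hom C (FO (shO C A)) (shO C (FO A)) \<and> is_iso C \<phi>) \<and>
     (\<forall>f g h. (f,g,h) \<in> Dist C \<longrightarrow> (\<exists>h'. (FM f, FM g, h') \<in> Dist C))"

lemma thick_vimage_exact_functor:
  assumes S: "thick C S" and F: "exact_functor FO FM"
  shows "thick C {X \<in> Ob C. FO X \<in> S}"
  unfolding thick_def
proof (intro conjI)
  have add: "additive_functor C FO FM" using F unfolding exact_functor_def by blast
  show "{X \<in> Ob C. FO X \<in> S} \<subseteq> Ob C" by blast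
  obtain Z where Z: "is_zero_obj C Z" using zero_obj_exists .
  then have "Z \<in> Ob C" "FO Z \<in> S"
    using thick_zero_obj[OF S additive_functor_zero_obj[OF add Z]] unfolding is_zero_obj_def by blast+
  then show "\<exists>Z\<in>{X \<in> Ob C. FO X \<in> S}. is_zero_obj C Z" using Z by blast
  show "\<forall>A\<in>Ob C. shO C A \<in> {X \<in> Ob C. FO X \<in> S} \<longleftrightarrow> A \<in> {X \<in> Ob C. FO X \<in> S}"
  proof
    fix A assume A: "A \<in> Ob C"
    obtain \<phi> where "\<phi> \<in> hom C (FO (shO C A)) (shO C (FO A))" "is_iso C \<phi>"
      using F A unfolding exact_functor_def by blast
    then have "FO (shO C A) \<in> S \<longleftrightarrow> FO A \<in> S"
      using thick_iso_iff[OF S] thick_shO_iff[OF S additive_functor_Ob[OF add A]] by blast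
    then show "shO C A \<in> {X \<in> Ob C. FO X \<in> S} \<longleftrightarrow> A \<in> {X \<in> Ob C. FO X \<in> S}" using A shO_Ob by blast
  qed
  show "\<forall>f g h. (f,g,h) \<in> Dist C \<and> mdom C f \<in> {X \<in> Ob C. FO X \<in> S} \<and> mdom C g \<in> {X \<in> Ob C. FO X \<in> S}
      \<longrightarrow> mcod C g \<in> {X \<in> Ob C. FO X \<in> S}"
  proof (intro allI impI)
    fix f g h assume a: "(f,g,h) \<in> Dist C \<and> mdom C f \<in> {X \<in> Ob C. FO X \<in> S} \<and> mdom C g \<in> {X \<in> Ob C. FO X \<in> S}"
    obtain X Y Z where f: "f \<in> hom C X Y" and g: "g \<in> hom C Y Z" and "h \<in> hom C Z (shO C X)"
      using dist_homE a by blast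
    obtain h' where d': "(FM f, FM g, h') \<in> Dist C" using F a unfolding exact_functor_def by blast
    have "mdom C (FM f) = FO X" "mdom C (FM g) = FO Y" "mcod C (FM g) = FO Z"
      using additive_functor_hom[OF add f] additive_functor_hom[OF add g] in_hom_iff by blast+
    moreover have "mdom C f = X" "mdom C g = Y" "mcod C g = Z" "Z \<in> Ob C"
      using f g in_hom_iff hom_Ob by blast+
    ultimately show "mcod C g \<in> {X \<in> Ob C. FO X \<in> S}"
      using thick_cone[OF S d'] a by simp
  qed
  show "\<forall>A B. is_summand C A B \<and> B \<in> {X \<in> Ob C. FO X \<in> S} \<longrightarrow> A \<in> {X \<in> Ob C. FO X \<in> S}"
  proof (intro allI impI)
    fix A B assume a: "is_summand C A B \<and> B \<in> {X \<in> Ob C. FO X \<in> S}"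
    then obtain A' i1 p1 i2 p2 where "is_biprod C A A' B i1 p1 i2 p2" "A \<in> Ob C"
      unfolding is_summand_def by blast
    then show "A \<in> {X \<in> Ob C. FO X \<in> S}"
      using is_biprod_summands(1)[OF additive_functor_biprod[OF add]] thick_summand[OF S] a by blast
  qed
qed

end

section \<open>Monoidal triangulated categories\<close>

locale monoidal_triangulated_category =
  fixes C :: "('o,'m,'x) mdc_scheme"
  assumes monoidal_triangulated: "is_monoidal_triangulated C"

sublocale monoidal_triangulated_category \<subseteq> triangulated_category
  using monoidal_triangulated unfolding is_monoidal_triangulated_def by unfold_locales blast

context monoidal_triangulated_category
begin

lemma unitO_Ob: "unitO C \<in> Ob C"
  using monoidal_triangulated unfolding is_monoidal_triangulated_def by (elim conjE)

lemma tenO_Ob: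
  assumes "A \<in> Ob C" "B \<in> Ob C"
  shows "tenO C A B \<in> Ob C"
proof -
  have "\<forall>A\<in>Ob C. \<forall>B\<in>Ob C. tenO C A B \<in> Ob C"
    using monoidal_triangulated unfolding is_monoidal_triangulated_def by (elim conjE)
  then show ?thesis using assms by blast
qed

lemma tenM_hom:
  assumes "f \<in> hom C A B" "g \<in> hom C A' B'"
  shows "tenM C f g \<in> hom C (tenO C A A') (tenO C B B')"
proof -
  have "\<forall>A\<in>Ob C. \<forall>B\<in>Ob C. \<forall>A'\<in>Ob C. \<forall>B'\<in>Ob C. \<forall>f\<in>hom C A B. \<forall>g\<in>hom C A' B'.
      tenM C f g \<in> hom C (tenO C A A') (tenO C B B')"
    using monoidal_triangulated unfolding is_monoidal_triangulated_def by (elim conjE)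
  then show ?thesis using assms hom_Ob by blast
qed

lemma tenM_idm:
  assumes "A \<in> Ob C" "B \<in> Ob C"
  shows "tenM C (idm C A) (idm C B) = idm C (tenO C A B)"
proof -
  have "\<forall>A\<in>Ob C. \<forall>B\<in>Ob C. tenM C (idm C A) (idm C B) = idm C (tenO C A B)"
    using monoidal_triangulated unfolding is_monoidal_triangulated_def by (elim conjE)
  then show ?thesis using assms by blast
qed

lemma tenM_cmp:
  assumes "f \<in> hom C A B" "g \<in> hom C B D" "f' \<in> hom C A' B'" "g' \<in> hom C B' D'"
  shows "tenM C (cmp C g f) (cmp C g' f') = cmp C (tenM C g g') (tenM C f f')"
proof -
  have "\<forall>f\<in>Mor C. \<forall>g\<in>Mor C. \<forall>f'\<in>Mor C. \<forall>g'\<in>Mor C. mcod C f = mdom C g \<and> mcod C f' = mdom C g' \<longrightarrow>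
      tenM C (cmp C g f) (cmp C g' f') = cmp C (tenM C g g') (tenM C f f')"
    using monoidal_triangulated unfolding is_monoidal_triangulated_def by (elim conjE)
  then show ?thesis using assms unfolding in_hom_iff by auto
qed

lemma tenM_madd:
  assumes "f \<in> hom C A B" "g \<in> hom C A B" "h \<in> Mor C"
  shows "tenM C (madd C f g) h = madd C (tenM C f h) (tenM C g h)"
    and "tenM C h (madd C f g) = madd C (tenM C h f) (tenM C h g)"
proof -
  have "\<forall>A\<in>Ob C. \<forall>B\<in>Ob C. \<forall>f\<in>hom C A B. \<forall>g\<in>hom C A B. \<forall>h\<in>Mor C.
      tenM C (madd C f g) h = madd C (tenM C f h) (tenM C g h) \<and>
      tenM C h (madd C f g) = madd C (tenM C h f) (tenM C h g)"
    using monoidal_triangulated unfolding is_monoidal_triangulated_def by (elim conjE)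
  then show "tenM C (madd C f g) h = madd C (tenM C f h) (tenM C g h)"
    and "tenM C h (madd C f g) = madd C (tenM C h f) (tenM C h g)"
    using assms hom_Ob by blast+
qed

lemma assoc_iso:
  assumes "A \<in> Ob C" "B \<in> Ob C" "D \<in> Ob C"
  shows "assoc C A B D \<in> hom C (tenO C (tenO C A B) D) (tenO C A (tenO C B D))"
    and "is_iso C (assoc C A B D)"
proof -
  have "\<forall>A\<in>Ob C. \<forall>B\<in>Ob C. \<forall>D\<in>Ob C.
      assoc C A B D \<in> hom C (tenO C (tenO C A B) D) (tenO C A (tenO C B D)) \<and> is_iso C (assoc C A B D)"
    using monoidal_triangulated unfolding is_monoidal_triangulated_def by (elim conjE)
  then show "assoc C A B D \<in> hom C (tenO C (tenO C A B) D) (tenO C A (tenO C B D))"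
    and "is_iso C (assoc C A B D)"
    using assms by blast+
qed

lemma unitor_iso:
  assumes "A \<in> Ob C"
  shows "lunit C A \<in> hom C (tenO C (unitO C) A) A" "is_iso C (lunit C A)"
    and "runit C A \<in> hom C (tenO C A (unitO C)) A" "is_iso C (runit C A)"
proof -
  have "\<forall>A\<in>Ob C. lunit C A \<in> hom C (tenO C (unitO C) A) A \<and> is_iso C (lunit C A) \<and>
      runit C A \<in> hom C (tenO C A (unitO C)) A \<and> is_iso C (runit C A)"
    using monoidal_triangulated unfolding is_monoidal_triangulated_def by (elim conjE)
  then show "lunit C A \<in> hom C (tenO C (unitO C) A) A" "is_iso C (lunit C A)"
    and "runit C A \<in> hom C (tenO C A (unitO C)) A" "is_iso C (runit C A)"
    using assms by blast+
qed

lemma tensor_shift_iso: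
  assumes "A \<in> Ob C" "B \<in> Ob C"
  shows "ltw C A B \<in> hom C (tenO C (shO C A) B) (shO C (tenO C A B))" "is_iso C (ltw C A B)"
    and "rtw C A B \<in> hom C (tenO C A (shO C B)) (shO C (tenO C A B))" "is_iso C (rtw C A B)"
proof -
  have "\<forall>A\<in>Ob C. \<forall>B\<in>Ob C.
      ltw C A B \<in> hom C (tenO C (shO C A) B) (shO C (tenO C A B)) \<and> is_iso C (ltw C A B) \<and>
      rtw C A B \<in> hom C (tenO C A (shO C B)) (shO C (tenO C A B)) \<and> is_iso C (rtw C A B)"
    using monoidal_triangulated unfolding is_monoidal_triangulated_def by (elim conjE)
  then show "ltw C A B \<in> hom C (tenO C (shO C A) B) (shO C (tenO C A B))" "is_iso C (ltw C A B)"
    and "rtw C A B \<in> hom C (tenO C A (shO C B)) (shO C (tenO C A B))" "is_iso C (rtw C A B)"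
    using assms by blast+
qed

lemma tensor_dist:
  assumes "B \<in> Ob C" "(f,g,h) \<in> Dist C"
  shows "(tenM C f (idm C B), tenM C g (idm C B), cmp C (ltw C (mdom C f) B) (tenM C h (idm C B))) \<in> Dist C"
    and "(tenM C (idm C B) f, tenM C (idm C B) g, cmp C (rtw C B (mdom C f)) (tenM C (idm C B) h)) \<in> Dist C"
proof -
  have "\<forall>B\<in>Ob C. \<forall>f g h. (f,g,h) \<in> Dist C \<longrightarrow>
      (tenM C f (idm C B), tenM C g (idm C B), cmp C (ltw C (mdom C f) B) (tenM C h (idm C B))) \<in> Dist C \<and>
      (tenM C (idm C B) f, tenM C (idm C B) g, cmp C (rtw C B (mdom C f)) (tenM C (idm C B) h)) \<in> Dist C"
    using monoidal_triangulated unfolding is_monoidal_triangulated_def by (elim conjE)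
  then show "(tenM C f (idm C B), tenM C g (idm C B), cmp C (ltw C (mdom C f) B) (tenM C h (idm C B))) \<in> Dist C"
    and "(tenM C (idm C B) f, tenM C (idm C B) g, cmp C (rtw C B (mdom C f)) (tenM C (idm C B) h)) \<in> Dist C"
    using assms by blast+
qed

lemma tensor_right_exact:
  assumes R: "R \<in> Ob C"
  shows "exact_functor (\<lambda>A. tenO C A R) (\<lambda>f. tenM C f (idm C R))"
  unfolding exact_functor_def additive_functor_def
proof (intro conjI allI impI ballI)
  have iR: "idm C R \<in> hom C R R" using idm_in_hom[OF R] .
  show "tenO C A R \<in> Ob C" if "A \<in> Ob C" for A using tenO_Ob that R by blast
  show "tenM C f (idm C R) \<in> hom C (tenO C A R) (tenO C B R)" if "f \<in> hom C A B" for A B f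
    using tenM_hom[OF that iR] .
  show "tenM C (idm C A) (idm C R) = idm C (tenO C A R)" if "A \<in> Ob C" for A
    using tenM_idm[OF that R] .
  show "tenM C (cmp C g f) (idm C R) = cmp C (tenM C g (idm C R)) (tenM C f (idm C R))"
    if "f \<in> hom C A B" "g \<in> hom C B D" for A B D f g
    using tenM_cmp[OF that iR iR] cmp_idm_left[OF iR] by simp
  show "tenM C (madd C f g) (idm C R) = madd C (tenM C f (idm C R)) (tenM C g (idm C R))"
    if "f \<in> hom C A B" "g \<in> hom C A B" for A B f g
    using tenM_madd(1)[OF that] iR in_hom_iff by blast
  show "\<exists>\<phi>. \<phi> \<in> hom C (tenO C (shO C A) R) (shO C (tenO C A R)) \<and> is_iso C \<phi>" if "A \<in> Ob C" for A
    using tensor_shift_iso[OF that R] by blast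
  show "\<exists>h'. (tenM C f (idm C R), tenM C g (idm C R), h') \<in> Dist C" if "(f,g,h) \<in> Dist C" for f g h
    using tensor_dist(1)[OF R that] by blast
qed

lemma tensor_left_exact:
  assumes R: "R \<in> Ob C"
  shows "exact_functor (\<lambda>A. tenO C R A) (\<lambda>f. tenM C (idm C R) f)"
  unfolding exact_functor_def additive_functor_def
proof (intro conjI allI impI ballI)
  have iR: "idm C R \<in> hom C R R" using idm_in_hom[OF R] .
  show "tenO C R A \<in> Ob C" if "A \<in> Ob C" for A using tenO_Ob that R by blast
  show "tenM C (idm C R) f \<in> hom C (tenO C R A) (tenO C R B)" if "f \<in> hom C A B" for A B f
    using tenM_hom[OF iR that] .
  show "tenM C (idm C R) (idm C A) = idm C (tenO C R A)" if "A \<in> Ob C" for A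
    using tenM_idm[OF R that] .
  show "tenM C (idm C R) (cmp C g f) = cmp C (tenM C (idm C R) g) (tenM C (idm C R) f)"
    if "f \<in> hom C A B" "g \<in> hom C B D" for A B D f g
    using tenM_cmp[OF iR iR that] cmp_idm_left[OF iR] by simp
  show "tenM C (idm C R) (madd C f g) = madd C (tenM C (idm C R) f) (tenM C (idm C R) g)"
    if "f \<in> hom C A B" "g \<in> hom C A B" for A B f g
    using tenM_madd(2)[OF that] iR in_hom_iff by blast
  show "\<exists>\<phi>. \<phi> \<in> hom C (tenO C R (shO C A)) (shO C (tenO C R A)) \<and> is_iso C \<phi>" if "A \<in> Ob C" for A
    using tensor_shift_iso[OF R that] by blast
  show "\<exists>h'. (tenM C (idm C R) f, tenM C (idm C R) g, h') \<in> Dist C" if "(f,g,h) \<in> Dist C" for f g h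
    using tensor_dist(2)[OF R that] by blast
qed

lemma thick_vimage_tensor_right: "thick C S \<Longrightarrow> R \<in> Ob C \<Longrightarrow> thick C {X \<in> Ob C. tenO C X R \<in> S}"
  using thick_vimage_exact_functor tensor_right_exact by blast

lemma thick_vimage_tensor_left: "thick C S \<Longrightarrow> R \<in> Ob C \<Longrightarrow> thick C {X \<in> Ob C. tenO C R X \<in> S}"
  using thick_vimage_exact_functor tensor_left_exact by blast

lemma thick_tenO_iso_iff:
  assumes S: "thick C S" and f: "f \<in> hom C A B" and iso: "is_iso C f" and R: "R \<in> Ob C"
  shows "tenO C A R \<in> S \<longleftrightarrow> tenO C B R \<in> S"
  using thick_iso_iff[OF S tenM_hom[OF f idm_in_hom[OF R]]]
    additive_functor_iso[OF tensor_right_exact[OF R, unfolded exact_functor_def, THEN conjunct1] f iso]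
  by simp

lemma thick_tenO_assoc_iff:
  assumes "thick C S" "A \<in> Ob C" "B \<in> Ob C" "D \<in> Ob C"
  shows "tenO C (tenO C A B) D \<in> S \<longleftrightarrow> tenO C A (tenO C B D) \<in> S"
  using thick_iso_iff[OF assms(1) assoc_iso[OF assms(2-4)]] .

lemma thick_ideal_thick: "thick_ideal C I \<Longrightarrow> thick C I"
  unfolding thick_ideal_def by blast

lemma thick_ideal_subset: "thick_ideal C I \<Longrightarrow> I \<subseteq> Ob C"
  unfolding thick_ideal_def using thick_subset by blast

lemma thick_ideal_tenO:
  assumes "thick_ideal C I" "A \<in> I" "B \<in> Ob C"
  shows "tenO C A B \<in> I" "tenO C B A \<in> I"
  using assms unfolding thick_ideal_def by blast+

lemma thick_ideal_Inter:
  assumes "\<forall>T\<in>\<T>. thick_ideal C T"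
  shows "thick_ideal C (Ob C \<inter> \<Inter>\<T>)"
  using thick_Inter[of \<T>] assms tenO_Ob unfolding thick_ideal_def by blast

lemma thick_ideal_Union_chain:
  assumes ne: "\<C> \<noteq> {}" and I: "\<forall>I\<in>\<C>. thick_ideal C I" and chain: "\<forall>I\<in>\<C>. \<forall>J\<in>\<C>. I \<subseteq> J \<or> J \<subseteq> I"
  shows "thick_ideal C (\<Union>\<C>)"
  unfolding thick_ideal_def thick_def
proof (intro conjI)
  have T: "\<forall>I\<in>\<C>. thick C I" using I thick_ideal_thick by blast
  show "\<Union>\<C> \<subseteq> Ob C" using I thick_ideal_subset by blast
  obtain I0 where I0: "I0 \<in> \<C>" using ne by blast
  obtain Z where Z: "is_zero_obj C Z" using zero_obj_exists .
  then show "\<exists>Z\<in>\<Union>\<C>. is_zero_obj C Z" using thick_zero_obj T I0 by blast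
  show "\<forall>A\<in>Ob C. shO C A \<in> \<Union>\<C> \<longleftrightarrow> A \<in> \<Union>\<C>"
  proof
    fix A assume "A \<in> Ob C"
    then have "\<forall>J\<in>\<C>. shO C A \<in> J \<longleftrightarrow> A \<in> J" using thick_shO_iff T by blast
    then show "shO C A \<in> \<Union>\<C> \<longleftrightarrow> A \<in> \<Union>\<C>" by blast
  qed
  show "\<forall>f g h. (f,g,h) \<in> Dist C \<and> mdom C f \<in> \<Union>\<C> \<and> mdom C g \<in> \<Union>\<C> \<longrightarrow> mcod C g \<in> \<Union>\<C>"
  proof (intro allI impI)
    fix f g h assume a: "(f,g,h) \<in> Dist C \<and> mdom C f \<in> \<Union>\<C> \<and> mdom C g \<in> \<Union>\<C>"
    then obtain J1 J2 where J: "J1 \<in> \<C>" "J2 \<in> \<C>" "mdom C f \<in> J1" "mdom C g \<in> J2" by blast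
    then obtain J where "J \<in> \<C>" "mdom C f \<in> J" "mdom C g \<in> J" using chain by blast
    then show "mcod C g \<in> \<Union>\<C>" using thick_cone[of J f g h] T a by blast
  qed
  show "\<forall>A B. is_summand C A B \<and> B \<in> \<Union>\<C> \<longrightarrow> A \<in> \<Union>\<C>"
  proof (intro allI impI)
    fix A B assume a: "is_summand C A B \<and> B \<in> \<Union>\<C>"
    then obtain J where "J \<in> \<C>" "B \<in> J" by blast
    then show "A \<in> \<Union>\<C>" using thick_summand[of J A B] T a by blast
  qed
  show "\<forall>A\<in>\<Union>\<C>. \<forall>B\<in>Ob C. tenO C A B \<in> \<Union>\<C> \<and> tenO C B A \<in> \<Union>\<C>"
  proof (intro ballI)
    fix A B assume "A \<in> \<Union>\<C>" "B \<in> Ob C"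
    then obtain J where "J \<in> \<C>" "A \<in> J" "B \<in> Ob C" by blast
    then show "tenO C A B \<in> \<Union>\<C> \<and> tenO C B A \<in> \<Union>\<C>" using thick_ideal_tenO I by blast
  qed
qed

lemma unitO_notin_proper_ideal:
  assumes I: "thick_ideal C I" and proper: "I \<noteq> Ob C"
  shows "unitO C \<notin> I"
proof
  assume u: "unitO C \<in> I"
  have "A \<in> I" if A: "A \<in> Ob C" for A
    using thick_ideal_tenO(1)[OF I u A] thick_iso_iff[OF thick_ideal_thick[OF I] unitor_iso(1,2)[OF A]]
    by blast
  then show False using proper thick_ideal_subset[OF I] by blast
qed

definition ideal_gen :: "'o set \<Rightarrow> 'o set" where
  "ideal_gen X = Ob C \<inter> \<Inter>{I. thick_ideal C I \<and> X \<subseteq> I}"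

lemma ideal_gen_thick_ideal: "thick_ideal C (ideal_gen X)"
  unfolding ideal_gen_def by (rule thick_ideal_Inter) blast

lemma ideal_gen_superset: "X \<subseteq> Ob C \<Longrightarrow> X \<subseteq> ideal_gen X"
  unfolding ideal_gen_def by blast

lemma ideal_gen_least: "thick_ideal C I \<Longrightarrow> X \<subseteq> I \<Longrightarrow> ideal_gen X \<subseteq> I"
  unfolding ideal_gen_def by blast

text \<open>Without commutativity, I \<otimes> J \<subseteq> P does not pass from generators to the ideals they generate;
  the condition x \<otimes> c \<otimes> y \<in> P for all c does, because for fixed x (or y) the admissible y (or x)
  form a thick ideal.\<close>
definition tensor_sandwich :: "'o set \<Rightarrow> 'o set \<Rightarrow> 'o set" where
  "tensor_sandwich X Y = {tenO C (tenO C x c) y | x c y. x \<in> X \<and> c \<in> Ob C \<and> y \<in> Y}"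

lemma tensor_sandwich_subset_iff:
  "tensor_sandwich X Y \<subseteq> P \<longleftrightarrow> (\<forall>x\<in>X. \<forall>c\<in>Ob C. \<forall>y\<in>Y. tenO C (tenO C x c) y \<in> P)"
  unfolding tensor_sandwich_def by blast

lemma sandwich_right_ideal:
  assumes P: "thick_ideal C P" and X: "X \<subseteq> Ob C"
  shows "thick_ideal C {V \<in> Ob C. tensor_sandwich X {V} \<subseteq> P}" (is "thick_ideal C ?Q")
proof -
  have PT: "thick C P" using thick_ideal_thick[OF P] .
  have Q: "V \<in> ?Q \<longleftrightarrow> V \<in> Ob C \<and> (\<forall>x\<in>X. \<forall>c\<in>Ob C. tenO C (tenO C x c) V \<in> P)" for V
    unfolding tensor_sandwich_subset_iff by blast
  have "?Q = Ob C \<inter> \<Inter>((\<lambda>(x,c). {V \<in> Ob C. tenO C (tenO C x c) V \<in> P}) ` (X \<times> Ob C))"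
    by (auto simp: tensor_sandwich_subset_iff)
  moreover have "thick C (Ob C \<inter> \<Inter>((\<lambda>(x,c). {V \<in> Ob C. tenO C (tenO C x c) V \<in> P}) ` (X \<times> Ob C)))"
    by (rule thick_Inter) (use thick_vimage_tensor_left[OF PT] tenO_Ob X in auto)
  ultimately have "thick C ?Q" by simp
  moreover have "tenO C V D \<in> ?Q \<and> tenO C D V \<in> ?Q" if V: "V \<in> ?Q" and D: "D \<in> Ob C" for V D
  proof -
    have VO: "V \<in> Ob C" using V Q by blast
    have "tenO C (tenO C x c) (tenO C V D) \<in> P \<and> tenO C (tenO C x c) (tenO C D V) \<in> P"
      if x: "x \<in> X" and c: "c \<in> Ob C" for x c
    proof
      have xO: "x \<in> Ob C" "tenO C x c \<in> Ob C" using x X tenO_Ob c by blast+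
      have "tenO C (tenO C x c) V \<in> P" using V x c Q by blast
      then show "tenO C (tenO C x c) (tenO C V D) \<in> P"
        using thick_ideal_tenO(1)[OF P _ D] thick_tenO_assoc_iff[OF PT xO(2) VO D] by blast
      have "tenO C (tenO C x (tenO C c D)) V \<in> P" using V x c D tenO_Ob Q by blast
      then show "tenO C (tenO C x c) (tenO C D V) \<in> P"
        using thick_tenO_assoc_iff[OF PT xO(2) D VO] thick_tenO_iso_iff[OF PT assoc_iso[OF xO(1) c D] VO]
        by blast
    qed
    then show ?thesis using Q VO D tenO_Ob by blast
  qed
  ultimately show ?thesis unfolding thick_ideal_def by blast
qed

lemma sandwich_left_ideal:
  assumes P: "thick_ideal C P" and Y: "Y \<subseteq> Ob C"
  shows "thick_ideal C {U \<in> Ob C. tensor_sandwich {U} Y \<subseteq> P}" (is "thick_ideal C ?Q")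
proof -
  have PT: "thick C P" using thick_ideal_thick[OF P] .
  have Q: "U \<in> ?Q \<longleftrightarrow> U \<in> Ob C \<and> (\<forall>c\<in>Ob C. \<forall>y\<in>Y. tenO C (tenO C U c) y \<in> P)" for U
    unfolding tensor_sandwich_subset_iff by blast
  have "?Q = Ob C \<inter> \<Inter>((\<lambda>(y,c). {U \<in> Ob C. tenO C U c \<in> {W \<in> Ob C. tenO C W y \<in> P}}) ` (Y \<times> Ob C))"
    using tenO_Ob by (auto simp: tensor_sandwich_subset_iff)
  moreover have "thick C (Ob C \<inter> \<Inter>((\<lambda>(y,c). {U \<in> Ob C. tenO C U c \<in> {W \<in> Ob C. tenO C W y \<in> P}})
      ` (Y \<times> Ob C)))"
    by (rule thick_Inter) (use thick_vimage_tensor_right[OF thick_vimage_tensor_right[OF PT]] Y in auto)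
  ultimately have "thick C ?Q" by simp
  moreover have "tenO C U D \<in> ?Q \<and> tenO C D U \<in> ?Q" if U: "U \<in> ?Q" and D: "D \<in> Ob C" for U D
  proof -
    have UO: "U \<in> Ob C" using U Q by blast
    have "tenO C (tenO C (tenO C U D) c) y \<in> P \<and> tenO C (tenO C (tenO C D U) c) y \<in> P"
      if c: "c \<in> Ob C" and y: "y \<in> Y" for c y
    proof
      have yO: "y \<in> Ob C" "tenO C U c \<in> Ob C" using y Y tenO_Ob UO c by blast+
      have "tenO C (tenO C U (tenO C D c)) y \<in> P" using U y c D tenO_Ob Q by blast
      then show "tenO C (tenO C (tenO C U D) c) y \<in> P"
        using thick_tenO_iso_iff[OF PT assoc_iso[OF UO D c] yO(1)] by blast
      have "tenO C D (tenO C (tenO C U c) y) \<in> P"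
        using thick_ideal_tenO(2)[OF P _ D] U y c Q by blast
      then show "tenO C (tenO C (tenO C D U) c) y \<in> P"
        using thick_tenO_assoc_iff[OF PT D yO(2,1)] thick_tenO_iso_iff[OF PT assoc_iso[OF D UO c] yO(1)]
        by blast
    qed
    then show ?thesis using Q UO D tenO_Ob by blast
  qed
  ultimately show ?thesis unfolding thick_ideal_def by blast
qed

lemma tensor_sandwich_ideal_gen:
  assumes P: "thick_ideal C P" and X: "X \<subseteq> Ob C" and Y: "Y \<subseteq> Ob C"
    and XY: "tensor_sandwich X Y \<subseteq> P"
  shows "tensor_sandwich (ideal_gen X) (ideal_gen Y) \<subseteq> P"
proof -
  have "Y \<subseteq> {V \<in> Ob C. tensor_sandwich X {V} \<subseteq> P}"
    using XY Y unfolding tensor_sandwich_subset_iff by blast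
  then have "ideal_gen Y \<subseteq> {V \<in> Ob C. tensor_sandwich X {V} \<subseteq> P}"
    using ideal_gen_least sandwich_right_ideal[OF P X] by blast
  then have "X \<subseteq> {U \<in> Ob C. tensor_sandwich {U} (ideal_gen Y) \<subseteq> P}"
    using X unfolding tensor_sandwich_subset_iff by blast
  then have "ideal_gen X \<subseteq> {U \<in> Ob C. tensor_sandwich {U} (ideal_gen Y) \<subseteq> P}"
    using ideal_gen_least sandwich_left_ideal[OF P thick_ideal_subset[OF ideal_gen_thick_ideal]] by blast
  then show ?thesis unfolding tensor_sandwich_subset_iff by blast
qed

lemma tensor_set_ideal_gen:
  assumes P: "thick_ideal C P" and X: "X \<subseteq> Ob C" and Y: "Y \<subseteq> Ob C"
    and XY: "tensor_sandwich X Y \<subseteq> P"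
  shows "tensor_set C (ideal_gen X) (ideal_gen Y) \<subseteq> P"
proof
  fix w assume "w \<in> tensor_set C (ideal_gen X) (ideal_gen Y)"
  then obtain U V where w: "w = tenO C U V" "U \<in> ideal_gen X" "V \<in> ideal_gen Y"
    unfolding tensor_set_def by blast
  have O: "U \<in> Ob C" "V \<in> Ob C" using w thick_ideal_subset ideal_gen_thick_ideal by blast+
  have "tenO C (tenO C U (unitO C)) V \<in> P"
    using tensor_sandwich_ideal_gen[OF P X Y XY] w unitO_Ob unfolding tensor_sandwich_subset_iff by blast
  then show "w \<in> P"
    using thick_tenO_iso_iff[OF thick_ideal_thick[OF P] unitor_iso(3,4)[OF O(1)] O(2)] w(1) by simp
qed

lemma tensor_sandwich_insert_subset:
  assumes P: "thick_ideal C P" and I: "thick_ideal C I" and J: "thick_ideal C J"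
    and IJ: "tensor_set C I J \<subseteq> P" and X: "X \<in> I" and Y: "Y \<in> J"
  shows "tensor_sandwich (insert X P) (insert Y P) \<subseteq> P"
  unfolding tensor_sandwich_subset_iff
proof (intro ballI)
  fix x c y assume x: "x \<in> insert X P" and c: "c \<in> Ob C" and y: "y \<in> insert Y P"
  have O: "X \<in> Ob C" "Y \<in> Ob C" using X Y thick_ideal_subset[OF I] thick_ideal_subset[OF J] by blast+
  have xO: "x \<in> Ob C" using x O(1) thick_ideal_subset[OF P] by blast
  have yO: "y \<in> Ob C" using y O(2) thick_ideal_subset[OF P] by blast
  show "tenO C (tenO C x c) y \<in> P"
  proof (cases "x \<in> P")
    case True
    show ?thesis using thick_ideal_tenO(1)[OF P thick_ideal_tenO(1)[OF P True c] yO] .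
  next
    case xP: False
    show ?thesis
    proof (cases "y \<in> P")
      case True
      show ?thesis using thick_ideal_tenO(2)[OF P True tenO_Ob[OF xO c]] .
    next
      case False
      then have "x = X" "y = Y" using x y xP by blast+
      moreover have "tenO C X (tenO C c Y) \<in> P"
        using IJ X thick_ideal_tenO(2)[OF J Y c] unfolding tensor_set_def by blast
      ultimately show ?thesis using thick_tenO_assoc_iff[OF thick_ideal_thick[OF P] O(1) c O(2)] by simp
    qed
  qed
qed

end

section \<open>The spectrum\<close>

lemma Diff_eq_Collect_iff: "U \<subseteq> S \<Longrightarrow> S - U = {x \<in> S. \<not> p x} \<longleftrightarrow> U = {x \<in> S. p x}"
  by blast

context monoidal_triangulated_category
begin

lemma Spc_thick_ideal: "P \<in> Spc C \<Longrightarrow> thick_ideal C P"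
  unfolding Spc_def prime_ideal_def by blast

lemma Spc_proper: "P \<in> Spc C \<Longrightarrow> P \<noteq> Ob C"
  unfolding Spc_def prime_ideal_def by blast

lemma Spc_has_zero_obj:
  assumes "P \<in> Spc C"
  shows "\<exists>Z\<in>P. Z \<in> Ob C"
proof -
  obtain Z where "is_zero_obj C Z" using zero_obj_exists .
  then show ?thesis
    using thick_zero_obj[OF thick_ideal_thick[OF Spc_thick_ideal[OF assms]]] unfolding is_zero_obj_def by blast
qed

definition dsum :: "'o \<Rightarrow> 'o \<Rightarrow> 'o" where
  "dsum A B = (SOME E. E \<in> Ob C \<and> (\<exists>i1 p1 i2 p2. is_biprod C A B E i1 p1 i2 p2))"

lemma dsum_biprod:
  assumes "A \<in> Ob C" "B \<in> Ob C"
  shows "dsum A B \<in> Ob C" "\<exists>i1 p1 i2 p2. is_biprod C A B (dsum A B) i1 p1 i2 p2"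
proof -
  have "\<exists>E. E \<in> Ob C \<and> (\<exists>i1 p1 i2 p2. is_biprod C A B E i1 p1 i2 p2)"
    using biprod_exists[OF assms] by metis
  then have "dsum A B \<in> Ob C \<and> (\<exists>i1 p1 i2 p2. is_biprod C A B (dsum A B) i1 p1 i2 p2)"
    unfolding dsum_def by (rule someI_ex)
  then show "dsum A B \<in> Ob C" "\<exists>i1 p1 i2 p2. is_biprod C A B (dsum A B) i1 p1 i2 p2" by blast+
qed

lemma dsum_mem_Spc_iff:
  assumes "P \<in> Spc C" "A \<in> Ob C" "B \<in> Ob C"
  shows "dsum A B \<in> P \<longleftrightarrow> A \<in> P \<and> B \<in> P"
proof -
  obtain i1 p1 i2 p2 where "is_biprod C A B (dsum A B) i1 p1 i2 p2" using dsum_biprod(2)[OF assms(2,3)] by blast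
  then show ?thesis using thick_biprod_iff[OF thick_ideal_thick[OF Spc_thick_ideal[OF assms(1)]]] by blast
qed

text \<open>Since the complement of V(A) is the set of primes containing A, the open sets of the spectrum are
  exactly the sets of primes meeting some set of objects.\<close>
definition spc_open :: "'o set set \<Rightarrow> bool" where
  "spc_open U \<longleftrightarrow> (\<exists>\<A>\<subseteq>Ob C. U = {P \<in> Spc C. \<A> \<inter> P \<noteq> {}})"

lemma spc_open_Int:
  assumes A: "\<A> \<subseteq> Ob C" and B: "\<B> \<subseteq> Ob C"
  shows "{P \<in> Spc C. \<A> \<inter> P \<noteq> {}} \<inter> {P \<in> Spc C. \<B> \<inter> P \<noteq> {}}
       = {P \<in> Spc C. {dsum a b | a b. a \<in> \<A> \<and> b \<in> \<B>} \<inter> P \<noteq> {}}"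
proof (intro equalityI subsetI)
  fix P assume "P \<in> {P \<in> Spc C. \<A> \<inter> P \<noteq> {}} \<inter> {P \<in> Spc C. \<B> \<inter> P \<noteq> {}}"
  then obtain a b where P: "P \<in> Spc C" and ab: "a \<in> \<A>" "a \<in> P" "b \<in> \<B>" "b \<in> P" by blast
  then have "dsum a b \<in> P" using dsum_mem_Spc_iff A B by blast
  then show "P \<in> {P \<in> Spc C. {dsum a b | a b. a \<in> \<A> \<and> b \<in> \<B>} \<inter> P \<noteq> {}}" using P ab by blast
next
  fix P assume "P \<in> {P \<in> Spc C. {dsum a b | a b. a \<in> \<A> \<and> b \<in> \<B>} \<inter> P \<noteq> {}}"
  then obtain a b where "P \<in> Spc C" "a \<in> \<A>" "b \<in> \<B>" "dsum a b \<in> P" by blast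
  then show "P \<in> {P \<in> Spc C. \<A> \<inter> P \<noteq> {}} \<inter> {P \<in> Spc C. \<B> \<inter> P \<noteq> {}}"
    using dsum_mem_Spc_iff A B by blast
qed

lemma istopology_spc_open: "istopology spc_open"
  unfolding istopology_def
proof (intro conjI allI impI)
  fix U V assume "spc_open U" "spc_open V"
  then obtain \<A> \<B> where A: "\<A> \<subseteq> Ob C" "U = {P \<in> Spc C. \<A> \<inter> P \<noteq> {}}"
    and B: "\<B> \<subseteq> Ob C" "V = {P \<in> Spc C. \<B> \<inter> P \<noteq> {}}"
    unfolding spc_open_def by blast
  have "{dsum a b | a b. a \<in> \<A> \<and> b \<in> \<B>} \<subseteq> Ob C" using dsum_biprod(1) A(1) B(1) by blast
  then show "spc_open (U \<inter> V)"
    unfolding spc_open_def A(2) B(2) spc_open_Int[OF A(1) B(1)] by blast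
next
  fix K assume "\<forall>U\<in>K. spc_open U"
  then have "\<forall>U\<in>K. \<exists>\<A>. \<A> \<subseteq> Ob C \<and> U = {P \<in> Spc C. \<A> \<inter> P \<noteq> {}}"
    unfolding spc_open_def by blast
  then obtain F where "\<forall>U\<in>K. F U \<subseteq> Ob C \<and> U = {P \<in> Spc C. F U \<inter> P \<noteq> {}}"
    by (rule bchoice[THEN exE])
  then have F: "\<And>U. U \<in> K \<Longrightarrow> F U \<subseteq> Ob C" "\<And>U. U \<in> K \<Longrightarrow> U = {P \<in> Spc C. F U \<inter> P \<noteq> {}}"
    by simp_all
  have "\<Union>K = (\<Union>U\<in>K. U)" by simp
  also have "\<dots> = (\<Union>U\<in>K. {P \<in> Spc C. F U \<inter> P \<noteq> {}})" by (rule SUP_cong[OF refl F(2)])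
  also have "\<dots> = {P \<in> Spc C. \<Union>(F ` K) \<inter> P \<noteq> {}}" by blast
  finally have "\<Union>K = {P \<in> Spc C. \<Union>(F ` K) \<inter> P \<noteq> {}}" .
  moreover have "\<Union>(F ` K) \<subseteq> Ob C" using F(1) by blast
  ultimately show "spc_open (\<Union>K)" unfolding spc_open_def by blast
qed

lemma Spc_Int_Inter_Vsupp: "Spc C \<inter> \<Inter>(Vsupp C ` \<A>) = {P \<in> Spc C. \<A> \<inter> P = {}}"
  unfolding Vsupp_def by blast

lemma openin_spc_top: "openin (spc_top C) = spc_open"
proof -
  have "(U \<subseteq> Spc C \<and> (\<exists>\<A>. \<A> \<subseteq> Ob C \<and> Spc C - U = Spc C \<inter> \<Inter>(Vsupp C ` \<A>))) \<longleftrightarrow> spc_open U"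
    for U
  proof
    assume "U \<subseteq> Spc C \<and> (\<exists>\<A>. \<A> \<subseteq> Ob C \<and> Spc C - U = Spc C \<inter> \<Inter>(Vsupp C ` \<A>))"
    then obtain \<A> where U: "U \<subseteq> Spc C" "\<A> \<subseteq> Ob C" "Spc C - U = {P \<in> Spc C. \<not> \<A> \<inter> P \<noteq> {}}"
      unfolding Spc_Int_Inter_Vsupp by auto
    then have "U = {P \<in> Spc C. \<A> \<inter> P \<noteq> {}}" using Diff_eq_Collect_iff[OF U(1)] by blast
    then show "spc_open U" unfolding spc_open_def using U(2) by blast
  next
    assume "spc_open U"
    then obtain \<A> where U: "\<A> \<subseteq> Ob C" "U = {P \<in> Spc C. \<A> \<inter> P \<noteq> {}}" unfolding spc_open_def by blast
    then have "U \<subseteq> Spc C" by blast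
    then have "Spc C - U = Spc C \<inter> \<Inter>(Vsupp C ` \<A>)"
      unfolding Spc_Int_Inter_Vsupp
      using Diff_eq_Collect_iff[OF \<open>U \<subseteq> Spc C\<close>, of "\<lambda>P. \<A> \<inter> P \<noteq> {}"] U(2) by simp
    then show "U \<subseteq> Spc C \<and> (\<exists>\<A>. \<A> \<subseteq> Ob C \<and> Spc C - U = Spc C \<inter> \<Inter>(Vsupp C ` \<A>))"
      using \<open>U \<subseteq> Spc C\<close> U(1) by blast
  qed
  then have "(\<lambda>U. U \<subseteq> Spc C \<and> (\<exists>\<A>. \<A> \<subseteq> Ob C \<and> Spc C - U = Spc C \<inter> \<Inter>(Vsupp C ` \<A>))) = spc_open"
    by (intro ext)
  then show ?thesis
    unfolding spc_top_def using topology_inverse'[OF istopology_spc_open] by simp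
qed

lemma topspace_spc_top: "topspace (spc_top C) = Spc C"
proof -
  have "{P \<in> Spc C. Ob C \<inter> P \<noteq> {}} = Spc C" using Spc_has_zero_obj by auto
  then have "spc_open (Spc C)" unfolding spc_open_def by (metis order_refl)
  moreover have "U \<subseteq> Spc C" if "spc_open U" for U using that unfolding spc_open_def by auto
  ultimately show ?thesis unfolding topspace_def openin_spc_top by (intro equalityI) auto
qed

lemma openin_spc_top_iff: "openin (spc_top C) U \<longleftrightarrow> (\<exists>\<A>\<subseteq>Ob C. U = {P \<in> Spc C. \<A> \<inter> P \<noteq> {}})"
  unfolding openin_spc_top spc_open_def ..

lemma closedin_spc_top_iff:
  "closedin (spc_top C) Z \<longleftrightarrow> (\<exists>\<A>\<subseteq>Ob C. Z = Spc C \<inter> \<Inter>(Vsupp C ` \<A>))"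
  unfolding Spc_Int_Inter_Vsupp
proof
  assume "closedin (spc_top C) Z"
  then obtain \<A> where Z: "Z \<subseteq> Spc C" "\<A> \<subseteq> Ob C" "Spc C - Z = {P \<in> Spc C. \<A> \<inter> P \<noteq> {}}"
    unfolding closedin_def topspace_spc_top openin_spc_top_iff by blast
  then have "Z = {P \<in> Spc C. \<A> \<inter> P = {}}"
    using Diff_eq_Collect_iff[OF Z(1), of "\<lambda>P. \<A> \<inter> P = {}"] by simp
  then show "\<exists>\<A>\<subseteq>Ob C. Z = {P \<in> Spc C. \<A> \<inter> P = {}}" using Z(2) by blast
next
  assume "\<exists>\<A>\<subseteq>Ob C. Z = {P \<in> Spc C. \<A> \<inter> P = {}}"
  then obtain \<A> where Z: "\<A> \<subseteq> Ob C" "Z = {P \<in> Spc C. \<A> \<inter> P = {}}" by blast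
  then have Z': "Z \<subseteq> Spc C" by blast
  then have "Spc C - Z = {P \<in> Spc C. \<A> \<inter> P \<noteq> {}}"
    using Diff_eq_Collect_iff[OF Z', of "\<lambda>P. \<A> \<inter> P = {}"] Z(2) by simp
  then show "closedin (spc_top C) Z"
    unfolding closedin_def topspace_spc_top openin_spc_top_iff using Z(1) Z' by blast
qed

lemma Vsupp_subset: "Vsupp C A \<subseteq> Spc C"
  unfolding Vsupp_def by blast

lemma closedin_Vsupp: "A \<in> Ob C \<Longrightarrow> closedin (spc_top C) (Vsupp C A)"
  unfolding closedin_spc_top_iff by (rule exI[of _ "{A}"]) (auto simp: Vsupp_def)

end

locale singly_generated_mtc = monoidal_triangulated_category +
  fixes G
  assumes generator_Ob: "G \<in> Ob C"
    and generates: "thick_gen C {G} = Ob C"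
begin

lemma thick_contains_generator: "thick C S \<Longrightarrow> G \<in> S \<Longrightarrow> Ob C \<subseteq> S"
  using generates unfolding thick_gen_def by blast

text \<open>The objects X with (A \<otimes> X) \<otimes> B \<in> P form a thick subcategory; containing G, it is all of K.\<close>
lemma prime_tensor_generator:
  assumes P: "prime_ideal C P" and A: "A \<in> Ob C" and B: "B \<in> Ob C"
    and AGB: "tenO C (tenO C A G) B \<in> P"
  shows "A \<in> P \<or> B \<in> P"
proof -
  have PI: "thick_ideal C P" using P unfolding prime_ideal_def by blast
  have "thick C {X \<in> Ob C. tenO C A X \<in> {Y \<in> Ob C. tenO C Y B \<in> P}}"
    using thick_vimage_tensor_left[OF thick_vimage_tensor_right[OF thick_ideal_thick[OF PI] B] A] .
  moreover have "G \<in> {X \<in> Ob C. tenO C A X \<in> {Y \<in> Ob C. tenO C Y B \<in> P}}"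
    using generator_Ob AGB tenO_Ob A by blast
  ultimately have "Ob C \<subseteq> {X \<in> Ob C. tenO C A X \<in> {Y \<in> Ob C. tenO C Y B \<in> P}}"
    using thick_contains_generator by blast
  then have "tensor_sandwich {A} {B} \<subseteq> P" unfolding tensor_sandwich_subset_iff by blast
  then have "tensor_set C (ideal_gen {A}) (ideal_gen {B}) \<subseteq> P"
    using tensor_set_ideal_gen[OF PI] A B by blast
  then have "ideal_gen {A} \<subseteq> P \<or> ideal_gen {B} \<subseteq> P"
    using P ideal_gen_thick_ideal unfolding prime_ideal_def by blast
  then show ?thesis using ideal_gen_superset A B by blast
qed

lemma Vsupp_tensor_generator:
  assumes A: "A \<in> Ob C" and B: "B \<in> Ob C"
  shows "Vsupp C (tenO C (tenO C A G) B) = Vsupp C A \<inter> Vsupp C B"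
proof (intro equalityI subsetI)
  fix P assume "P \<in> Vsupp C (tenO C (tenO C A G) B)"
  then have P: "P \<in> Spc C" "tenO C (tenO C A G) B \<notin> P" unfolding Vsupp_def by blast+
  have "A \<notin> P" using thick_ideal_tenO(1)[OF Spc_thick_ideal[OF P(1)]] generator_Ob B tenO_Ob P(2) by blast
  moreover have "B \<notin> P"
    using thick_ideal_tenO(2)[OF Spc_thick_ideal[OF P(1)] _ tenO_Ob[OF A generator_Ob]] P(2) by blast
  ultimately show "P \<in> Vsupp C A \<inter> Vsupp C B" using P(1) unfolding Vsupp_def by blast
next
  fix P assume "P \<in> Vsupp C A \<inter> Vsupp C B"
  then show "P \<in> Vsupp C (tenO C (tenO C A G) B)"
    using prime_tensor_generator A B unfolding Vsupp_def Spc_def by blast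
qed

lemma Vsupp_unitO: "Vsupp C (unitO C) = Spc C"
  unfolding Vsupp_def using unitO_notin_proper_ideal Spc_thick_ideal Spc_proper by blast

lemma Vsupp_finite_Inter:
  assumes "finite F" "F \<subseteq> Ob C"
  shows "\<exists>D\<in>Ob C. Vsupp C D = Spc C \<inter> \<Inter>(Vsupp C ` F)"
  using assms
proof (induction F rule: finite_induct)
  case empty
  then show ?case using Vsupp_unitO unitO_Ob by auto
next
  case (insert a F)
  then obtain D where D: "D \<in> Ob C" "Vsupp C D = Spc C \<inter> \<Inter>(Vsupp C ` F)" by blast
  have a: "a \<in> Ob C" using insert by blast
  have "Vsupp C (tenO C (tenO C a G) D) = Spc C \<inter> \<Inter>(Vsupp C ` insert a F)"
    using Vsupp_tensor_generator[OF a D(1)] D(2) Vsupp_subset by auto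
  moreover have "tenO C (tenO C a G) D \<in> Ob C" using tenO_Ob a generator_Ob D(1) by blast
  ultimately show ?case by blast
qed

lemma maximal_avoiding_ideal_prime:
  assumes P: "thick_ideal C P" and unit: "unitO C \<in> M"
    and mult: "\<And>x y. x \<in> M \<Longrightarrow> y \<in> M \<Longrightarrow> tenO C (tenO C x G) y \<in> M"
    and disj: "P \<inter> M = {}"
    and maximal: "\<And>J. thick_ideal C J \<Longrightarrow> P \<subseteq> J \<Longrightarrow> J \<inter> M = {} \<Longrightarrow> J = P"
  shows "P \<in> Spc C"
proof -
  have PO: "P \<subseteq> Ob C" using thick_ideal_subset[OF P] .
  have meets: "ideal_gen (insert X P) \<inter> M \<noteq> {}" if X: "X \<in> Ob C" "X \<notin> P" for X
  proof
    assume "ideal_gen (insert X P) \<inter> M = {}"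
    moreover have "insert X P \<subseteq> ideal_gen (insert X P)" using ideal_gen_superset PO X by blast
    ultimately have "ideal_gen (insert X P) = P" using maximal ideal_gen_thick_ideal by blast
    then show False using \<open>insert X P \<subseteq> ideal_gen (insert X P)\<close> X(2) by blast
  qed
  have "I \<subseteq> P \<or> J \<subseteq> P"
    if I: "thick_ideal C I" and J: "thick_ideal C J" and IJ: "tensor_set C I J \<subseteq> P" for I J
  proof (rule ccontr)
    assume "\<not> (I \<subseteq> P \<or> J \<subseteq> P)"
    then obtain X Y where XY: "X \<in> I" "X \<notin> P" "Y \<in> J" "Y \<notin> P" by blast
    have O: "X \<in> Ob C" "Y \<in> Ob C" using XY I J thick_ideal_subset by blast+
    obtain m1 m2 where m: "m1 \<in> ideal_gen (insert X P)" "m1 \<in> M" "m2 \<in> ideal_gen (insert Y P)" "m2 \<in> M"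
      using meets[OF O(1) XY(2)] meets[OF O(2) XY(4)] by blast
    have "tensor_sandwich (ideal_gen (insert X P)) (ideal_gen (insert Y P)) \<subseteq> P"
      using tensor_sandwich_ideal_gen[OF P _ _ tensor_sandwich_insert_subset[OF P I J IJ XY(1,3)]] PO O
      by blast
    then have "tenO C (tenO C m1 G) m2 \<in> P"
      using m(1,3) generator_Ob unfolding tensor_sandwich_subset_iff by blast
    then show False using mult[OF m(2,4)] disj by blast
  qed
  moreover have "P \<noteq> Ob C" using unit disj unitO_Ob by blast
  ultimately show ?thesis using P unfolding Spc_def prime_ideal_def by blast
qed

lemma prime_avoiding_exists:
  assumes A: "A \<in> Ob C" and unit: "unitO C \<in> M"
    and mult: "\<And>x y. x \<in> M \<Longrightarrow> y \<in> M \<Longrightarrow> tenO C (tenO C x G) y \<in> M"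
    and disj: "ideal_gen {A} \<inter> M = {}"
  obtains P where "P \<in> Spc C" "A \<in> P" "P \<inter> M = {}"
proof -
  define \<Z> where "\<Z> = {I. thick_ideal C I \<and> ideal_gen {A} \<subseteq> I \<and> I \<inter> M = {}}"
  have "\<exists>P\<in>\<Z>. \<forall>J\<in>\<Z>. P \<subseteq> J \<longrightarrow> J = P"
  proof (rule subset_Zorn_nonempty)
    show "\<Z> \<noteq> {}" unfolding \<Z>_def using ideal_gen_thick_ideal disj by blast
    fix \<C> assume ne: "\<C> \<noteq> {}" and "subset.chain \<Z> \<C>"
    then have sub: "\<C> \<subseteq> \<Z>" and chain: "\<forall>I\<in>\<C>. \<forall>J\<in>\<C>. I \<subseteq> J \<or> J \<subseteq> I"
      unfolding subset_chain_def by blast+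
    have "thick_ideal C (\<Union>\<C>)"
      using thick_ideal_Union_chain[OF ne _ chain] sub unfolding \<Z>_def by blast
    moreover have "ideal_gen {A} \<subseteq> \<Union>\<C>" using ne sub unfolding \<Z>_def by blast
    moreover have "\<Union>\<C> \<inter> M = {}" using sub unfolding \<Z>_def by blast
    ultimately show "\<Union>\<C> \<in> \<Z>" unfolding \<Z>_def by blast
  qed
  then obtain P where "P \<in> \<Z>" and max: "\<forall>J\<in>\<Z>. P \<subseteq> J \<longrightarrow> J = P" by blast
  then have P: "thick_ideal C P" "ideal_gen {A} \<subseteq> P" "P \<inter> M = {}" unfolding \<Z>_def by blast+
  have maximal: "J = P" if "thick_ideal C J" "P \<subseteq> J" "J \<inter> M = {}" for J
    using max that P(2) unfolding \<Z>_def by blast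
  have "P \<in> Spc C" using maximal_avoiding_ideal_prime[OF P(1) unit mult P(3) maximal] by blast
  moreover have "A \<in> P" using P(2) ideal_gen_superset A by blast
  ultimately show ?thesis using that P(3) by blast
qed

inductive_set mult_closure for B where
  unit: "unitO C \<in> mult_closure B"
| gen: "b \<in> B \<Longrightarrow> b \<in> mult_closure B"
| mult: "x \<in> mult_closure B \<Longrightarrow> y \<in> mult_closure B \<Longrightarrow> tenO C (tenO C x G) y \<in> mult_closure B"

lemma mult_closure_Ob: "m \<in> mult_closure B \<Longrightarrow> B \<subseteq> Ob C \<Longrightarrow> m \<in> Ob C"
  by (induction m rule: mult_closure.induct) (auto intro: unitO_Ob tenO_Ob generator_Ob)

lemma mult_closure_finite_witness:
  assumes "m \<in> mult_closure B" "B \<subseteq> Ob C"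
  shows "\<exists>F. finite F \<and> F \<subseteq> B \<and> (\<forall>P\<in>Spc C. m \<in> P \<longrightarrow> F \<inter> P \<noteq> {})"
  using assms
proof (induction m rule: mult_closure.induct)
  case unit
  have "unitO C \<notin> P" if "P \<in> Spc C" for P
    using unitO_notin_proper_ideal[OF Spc_thick_ideal Spc_proper] that by blast
  then show ?case by (intro exI[of _ "{}"]) simp
next
  case (gen b)
  then show ?case by (intro exI[of _ "{b}"]) auto
next
  case (mult x y)
  obtain F1 where F1: "finite F1" "F1 \<subseteq> B" "\<forall>P\<in>Spc C. x \<in> P \<longrightarrow> F1 \<inter> P \<noteq> {}"
    using mult.IH(1)[OF mult.prems] by blast
  obtain F2 where F2: "finite F2" "F2 \<subseteq> B" "\<forall>P\<in>Spc C. y \<in> P \<longrightarrow> F2 \<inter> P \<noteq> {}"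
    using mult.IH(2)[OF mult.prems] by blast
  have O: "x \<in> Ob C" "y \<in> Ob C" using mult_closure_Ob mult.hyps mult.prems by blast+
  have "(F1 \<union> F2) \<inter> P \<noteq> {}" if "P \<in> Spc C" "tenO C (tenO C x G) y \<in> P" for P
  proof -
    have "x \<in> P \<or> y \<in> P" using prime_tensor_generator[OF _ O] that unfolding Spc_def by blast
    then show ?thesis using F1(3) F2(3) that(1) by blast
  qed
  then show ?case using F1 F2 by (intro exI[of _ "F1 \<union> F2"]) simp
qed

lemma Spc_cover_finite:
  assumes A: "A \<in> Ob C" and B: "B \<subseteq> Ob C" and cover: "\<forall>P\<in>Spc C. A \<in> P \<longrightarrow> B \<inter> P \<noteq> {}"
  shows "\<exists>F. finite F \<and> F \<subseteq> B \<and> (\<forall>P\<in>Spc C. A \<in> P \<longrightarrow> F \<inter> P \<noteq> {})"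
proof (cases "ideal_gen {A} \<inter> mult_closure B = {}")
  case True
  obtain P where P: "P \<in> Spc C" "A \<in> P" "P \<inter> mult_closure B = {}"
    using prime_avoiding_exists[OF A mult_closure.unit mult_closure.mult True] .
  obtain b where "b \<in> B" "b \<in> P" using cover P(1,2) by blast
  then have "b \<in> P \<inter> mult_closure B" using mult_closure.gen by blast
  then show ?thesis using P(3) by blast
next
  case False
  then obtain m where m: "m \<in> ideal_gen {A}" "m \<in> mult_closure B" by blast
  have "m \<in> P" if "P \<in> Spc C" "A \<in> P" for P
    using m(1) ideal_gen_least[OF Spc_thick_ideal[OF that(1)]] that(2) by blast
  moreover obtain F where "finite F" "F \<subseteq> B" "\<forall>P\<in>Spc C. m \<in> P \<longrightarrow> F \<inter> P \<noteq> {}"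
    using mult_closure_finite_witness[OF m(2) B] by blast
  ultimately show ?thesis by blast
qed

lemma openin_spc_top_mem_iff:
  assumes "openin (spc_top C) U"
  shows "\<exists>\<A>. \<A> \<subseteq> Ob C \<and> (\<forall>P. P \<in> U \<longleftrightarrow> P \<in> Spc C \<and> \<A> \<inter> P \<noteq> {})"
proof -
  obtain \<A> where A: "\<A> \<subseteq> Ob C" "U = {P \<in> Spc C. \<A> \<inter> P \<noteq> {}}"
    using assms unfolding openin_spc_top_iff by blast
  then have "\<forall>P. P \<in> U \<longleftrightarrow> P \<in> Spc C \<and> \<A> \<inter> P \<noteq> {}" by simp
  then show ?thesis using A(1) by blast
qed

lemma compactin_Spc_Diff_Vsupp:
  assumes A: "A \<in> Ob C"
  shows "compactin (spc_top C) (Spc C - Vsupp C A)"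
  unfolding compactin_def topspace_spc_top
proof (intro conjI allI impI)
  show "Spc C - Vsupp C A \<subseteq> Spc C" by blast
  fix \<U> assume "(\<forall>U\<in>\<U>. openin (spc_top C) U) \<and> Spc C - Vsupp C A \<subseteq> \<Union>\<U>"
  then have opn: "\<forall>U\<in>\<U>. openin (spc_top C) U" and cov: "Spc C - Vsupp C A \<subseteq> \<Union>\<U>" by blast+
  have "\<forall>U\<in>\<U>. \<exists>\<A>. \<A> \<subseteq> Ob C \<and> (\<forall>P. P \<in> U \<longleftrightarrow> P \<in> Spc C \<and> \<A> \<inter> P \<noteq> {})"
    using openin_spc_top_mem_iff opn by blast
  then obtain F where "\<forall>U\<in>\<U>. F U \<subseteq> Ob C \<and> (\<forall>P. P \<in> U \<longleftrightarrow> P \<in> Spc C \<and> F U \<inter> P \<noteq> {})"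
    by (rule bchoice[THEN exE])
  then have F: "\<And>U. U \<in> \<U> \<Longrightarrow> F U \<subseteq> Ob C"
    and in_U: "\<And>U P. U \<in> \<U> \<Longrightarrow> P \<in> U \<Longrightarrow> F U \<inter> P \<noteq> {}"
    and U_in: "\<And>U P. U \<in> \<U> \<Longrightarrow> P \<in> Spc C \<Longrightarrow> F U \<inter> P \<noteq> {} \<Longrightarrow> P \<in> U"
    by blast+
  have cover: "\<forall>P\<in>Spc C. A \<in> P \<longrightarrow> \<Union>(F ` \<U>) \<inter> P \<noteq> {}"
  proof (intro ballI impI)
    fix P assume "P \<in> Spc C" "A \<in> P"
    then have "P \<in> Spc C - Vsupp C A" unfolding Vsupp_def by blast
    then have "P \<in> \<Union>\<U>" using cov by (rule subsetD[rotated])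
    then obtain U where U: "U \<in> \<U>" "P \<in> U" by (rule UnionE)
    then obtain x where "x \<in> F U" "x \<in> P" using in_U by blast
    then show "\<Union>(F ` \<U>) \<inter> P \<noteq> {}" using U(1) by blast
  qed
  have "\<Union>(F ` \<U>) \<subseteq> Ob C" using F by blast
  then obtain B where B: "finite B" "B \<subseteq> \<Union>(F ` \<U>)" "\<forall>P\<in>Spc C. A \<in> P \<longrightarrow> B \<inter> P \<noteq> {}"
    using Spc_cover_finite[OF A _ cover] by blast
  have "\<forall>b\<in>B. \<exists>U. U \<in> \<U> \<and> b \<in> F U" using B(2) by blast
  then obtain V where V: "\<forall>b\<in>B. V b \<in> \<U> \<and> b \<in> F (V b)" by (rule bchoice[THEN exE])
  have "Spc C - Vsupp C A \<subseteq> \<Union>(V ` B)"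
  proof
    fix P assume P: "P \<in> Spc C - Vsupp C A"
    then obtain b where b: "b \<in> B" "b \<in> P" using B(3) unfolding Vsupp_def by blast
    then have "V b \<in> \<U>" "b \<in> F (V b)" using V by blast+
    then have "P \<in> V b" using U_in[of "V b" P] b(2) P by blast
    then show "P \<in> \<Union>(V ` B)" using b(1) by blast
  qed
  moreover have "V ` B \<subseteq> \<U>" using V by blast
  moreover have "finite (V ` B)" using B(1) by simp
  ultimately show "\<exists>\<F>. finite \<F> \<and> \<F> \<subseteq> \<U> \<and> Spc C - Vsupp C A \<subseteq> \<Union>\<F>" by blast
qed

lemma closedin_compact_complement_Vsupp:
  assumes closed: "closedin (spc_top C) Z" and compact: "compactin (spc_top C) (topspace (spc_top C) - Z)"
  obtains D where "D \<in> Ob C" "Z = Vsupp C D"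
proof -
  obtain \<A> where A: "\<A> \<subseteq> Ob C" "Z = Spc C \<inter> \<Inter>(Vsupp C ` \<A>)"
    using closed unfolding closedin_spc_top_iff by blast
  have "openin (spc_top C) (Spc C - Vsupp C a)" if "a \<in> \<A>" for a
    using closedin_Vsupp[of a] A(1) that unfolding closedin_def topspace_spc_top by blast
  then have "\<forall>U\<in>(\<lambda>a. Spc C - Vsupp C a) ` \<A>. openin (spc_top C) U" by blast
  moreover have "Spc C - Z \<subseteq> \<Union>((\<lambda>a. Spc C - Vsupp C a) ` \<A>)" using A(2) by blast
  ultimately have "\<exists>\<F>. finite \<F> \<and> \<F> \<subseteq> (\<lambda>a. Spc C - Vsupp C a) ` \<A> \<and> Spc C - Z \<subseteq> \<Union>\<F>"
    using compact unfolding compactin_def topspace_spc_top by blast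
  then obtain \<F> where F: "finite \<F>" "\<F> \<subseteq> (\<lambda>a. Spc C - Vsupp C a) ` \<A>" "Spc C - Z \<subseteq> \<Union>\<F>"
    by blast
  obtain \<A>0 where A0: "\<A>0 \<subseteq> \<A>" "finite \<A>0" "\<F> = (\<lambda>a. Spc C - Vsupp C a) ` \<A>0"
    using finite_subset_image[OF F(1,2)] by blast
  have "Z = Spc C \<inter> \<Inter>(Vsupp C ` \<A>0)"
  proof (intro equalityI subsetI)
    fix P assume "P \<in> Z"
    then show "P \<in> Spc C \<inter> \<Inter>(Vsupp C ` \<A>0)" using A(2) A0(1) by blast
  next
    fix P assume P: "P \<in> Spc C \<inter> \<Inter>(Vsupp C ` \<A>0)"
    then have "P \<notin> \<Union>\<F>" unfolding A0(3) by blast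
    then show "P \<in> Z" using F(3) P by blast
  qed
  moreover obtain D where "D \<in> Ob C" "Vsupp C D = Spc C \<inter> \<Inter>(Vsupp C ` \<A>0)"
    using Vsupp_finite_Inter[OF A0(2)] A0(1) A(1) by blast
  ultimately show ?thesis using that by simp
qed

end

section \<open>Semiprime ideals and Thomason subsets\<close>

context monoidal_triangulated_category
begin

lemma Phi_eq_Union_Vsupp: "Phi C I = \<Union>(Vsupp C ` I)"
  unfolding Phi_def Vsupp_def by blast

lemma semiprime_Theta: "semiprime C (Theta C S)"
  unfolding semiprime_def Theta_def
proof (intro conjI)
  show "thick_ideal C (Ob C \<inter> \<Inter>(Spc C - S))"
    by (rule thick_ideal_Inter) (use Spc_thick_ideal in blast)
  show "\<exists>F. F \<subseteq> Spc C \<and> Ob C \<inter> \<Inter>(Spc C - S) = Ob C \<inter> \<Inter>F"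
    by (rule exI[of _ "Spc C - S"]) simp
qed

lemma Theta_Phi:
  assumes "semiprime C I"
  shows "Theta C (Phi C I) = I"
proof -
  obtain F where F: "F \<subseteq> Spc C" "I = Ob C \<inter> \<Inter>F" and I: "thick_ideal C I"
    using assms unfolding semiprime_def by blast
  have eq: "Spc C - Phi C I = {P \<in> Spc C. I \<subseteq> P}" unfolding Phi_def by blast
  have "F \<subseteq> {P \<in> Spc C. I \<subseteq> P}" using F by blast
  then have "Ob C \<inter> \<Inter>{P \<in> Spc C. I \<subseteq> P} \<subseteq> I" unfolding F(2) by blast
  moreover have "I \<subseteq> Ob C \<inter> \<Inter>{P \<in> Spc C. I \<subseteq> P}" using thick_ideal_subset[OF I] by blast
  ultimately show ?thesis unfolding Theta_def eq by (rule equalityI)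
qed

lemma Phi_mono: "I \<subseteq> J \<Longrightarrow> Phi C I \<subseteq> Phi C J"
  unfolding Phi_def by blast

lemma Theta_mono: "S \<subseteq> T \<Longrightarrow> Theta C S \<subseteq> Theta C T"
  unfolding Theta_def by blast

end

context singly_generated_mtc
begin

lemma thomason_Phi:
  assumes "I \<subseteq> Ob C"
  shows "thomason (spc_top C) (Phi C I)"
  unfolding thomason_def Phi_eq_Union_Vsupp
proof (intro exI conjI ballI)
  fix Z assume "Z \<in> Vsupp C ` I"
  then obtain A where A: "A \<in> Ob C" "Z = Vsupp C A" using assms by blast
  show "closedin (spc_top C) Z" using closedin_Vsupp A by blast
  show "compactin (spc_top C) (topspace (spc_top C) - Z)"
    using compactin_Spc_Diff_Vsupp A unfolding topspace_spc_top by blast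
qed (rule refl)

lemma thomason_Vsupp_cover:
  assumes "thomason (spc_top C) S" and "P \<in> S"
  obtains A where "A \<in> Ob C" "P \<in> Vsupp C A" "Vsupp C A \<subseteq> S"
proof -
  obtain \<Z> where Z: "\<forall>Z\<in>\<Z>. closedin (spc_top C) Z \<and> compactin (spc_top C) (topspace (spc_top C) - Z)"
    and S: "S = \<Union>\<Z>"
    using assms(1) unfolding thomason_def by blast
  obtain Z where "Z \<in> \<Z>" "P \<in> Z" using assms(2) S by blast
  moreover obtain D where "D \<in> Ob C" "Z = Vsupp C D"
    using closedin_compact_complement_Vsupp Z \<open>Z \<in> \<Z>\<close> by blast
  ultimately show ?thesis using that S by blast
qed

lemma Phi_Theta:
  assumes "thomason (spc_top C) S"
  shows "Phi C (Theta C S) = S"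
proof (intro equalityI subsetI)
  fix P assume "P \<in> Phi C (Theta C S)"
  then show "P \<in> S" unfolding Phi_def Theta_def by blast
next
  fix P assume P: "P \<in> S"
  obtain A where A: "A \<in> Ob C" "P \<in> Vsupp C A" "Vsupp C A \<subseteq> S"
    using thomason_Vsupp_cover[OF assms P] .
  then have "A \<in> Theta C S" unfolding Theta_def Vsupp_def by blast
  then show "P \<in> Phi C (Theta C S)" using A(2) unfolding Phi_def Vsupp_def by blast
qed

end

theorem mainTheorem17:
  fixes C :: "('o,'m) mdc" and G :: 'o
  assumes "is_monoidal_triangulated C"
    and "G \<in> Ob C"
    and "thick_gen C {G} = Ob C"
  shows "bij_betw (Phi C) {I. semiprime C I} {S. thomason (spc_top C) S}
       \<and> (\<forall>S. thomason (spc_top C) S \<longrightarrow> semiprime C (Theta C S))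
       \<and> (\<forall>I. semiprime C I \<longrightarrow> Theta C (Phi C I) = I)
       \<and> (\<forall>S. thomason (spc_top C) S \<longrightarrow> Phi C (Theta C S) = S)
       \<and> (\<forall>I J. semiprime C I \<and> semiprime C J \<and> I \<subseteq> J \<longrightarrow> Phi C I \<subseteq> Phi C J)
       \<and> (\<forall>S T. thomason (spc_top C) S \<and> thomason (spc_top C) T \<and> S \<subseteq> T \<longrightarrow> Theta C S \<subseteq> Theta C T)"
proof -
  interpret singly_generated_mtc C G
    using assms by unfold_locales
  have "bij_betw (Phi C) {I. semiprime C I} {S. thomason (spc_top C) S}"
  proof (rule bij_betwI)
    show "Phi C \<in> {I. semiprime C I} \<rightarrow> {S. thomason (spc_top C) S}"
      using thomason_Phi thick_ideal_subset unfolding semiprime_def by blast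
    show "Theta C \<in> {S. thomason (spc_top C) S} \<rightarrow> {I. semiprime C I}"
      using semiprime_Theta by blast
  qed (simp_all add: Theta_Phi Phi_Theta)
  then show ?thesis using semiprime_Theta Theta_Phi Phi_Theta Phi_mono Theta_mono by simp
qed

end
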